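(* Let $\varepsilon>0$, $0<\alpha<1$, and let $\psi:\mathbb{R}\to\mathbb{R}$ be a $1$-periodic function of class $C^2$ with $\|\psi''\|_\infty^2\le \dfrac{8\pi^2}{8/\alpha+1/\varepsilon^2}$. Then every minimizer of $E$ over $\mathcal{A}$ is a graph curve.
   Context: Let $\Omega=\{(x,y)\in\mathbb{R}^2: y>\psi(x)\}$, $\overline{\Omega}=\{y\ge\psi(x)\}$, $\partial\Omega=\{y=\psi(x)\}$, $I=(0,1)$. The admissible set $\mathcal{A}$ consists of all $\gamma=(x,y)\in H^2(I;\mathbb{R}^2)$ (hence $C^1$ on $\bar I$) with $|\dot\gamma(t)|>0$ and $\gamma(t)\in\overline{\Omega}$ for all $t\in\bar I$, and $x(0)=0$, $x(1)=1$, $y(0)=y(1)$, $\dot\gamma(0)=\dot\gamma(1)$. For $\gamma\in\mathcal{A}$ let $L_\gamma=\int_I|\dot\gamma|\,dt$ and, with arc length $s$, $E[\gamma]=\int_0^{L_\gamma}[\varepsilon^2|\gamma_{ss}(s)|^2+\Theta(\gamma(s))]\,ds$, where $\Theta\equiv1$ on $\Omega$ and $\Theta\equiv\alpha$ on $\partial\Omega$. A minimizer is a $\gamma\in\mathcal{A}$ with $E[\gamma]=\inf_{\mathcal{A}}E$. A curve $\gamma=(x,y)\in\mathcal{A}$ is a graph curve if $x'(t)>0$ for all $t\in\bar I$. *)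

theory Defs
  imports "HOL-Analysis.Analysis"
begin

definition dcurve :: "(real \<Rightarrow> real \<times> real) \<Rightarrow> real \<Rightarrow> real \<times> real" where
  "dcurve \<gamma> t = vector_derivative \<gamma> (at t within {0..1})"

definition ddcurve :: "(real \<Rightarrow> real \<times> real) \<Rightarrow> real \<Rightarrow> real \<times> real" where
  "ddcurve \<gamma> t = vector_derivative (dcurve \<gamma>) (at t within {0..1})"

text \<open>Sobolev regularity H^2(I;R^2): gamma is differentiable on [0,1] and its derivative
  is the indefinite integral of a square-integrable function g (the weak second derivative).\<close>
definition H2_curve :: "(real \<Rightarrow> real \<times> real) \<Rightarrow> bool" where
  "H2_curve \<gamma> \<longleftrightarrow>
     (\<forall>t\<in>{0..1}. \<gamma> differentiable (at t within {0..1})) \<and>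
     (\<exists>g :: real \<Rightarrow> real \<times> real.
        g absolutely_integrable_on {0..1} \<and>
        (\<lambda>t. (norm (g t))\<^sup>2) integrable_on {0..1} \<and>
        (\<forall>t\<in>{0..1}. dcurve \<gamma> t = dcurve \<gamma> 0 + integral {0..t} g))"

definition Omega_cl :: "(real \<Rightarrow> real) \<Rightarrow> (real \<times> real) set" where
  "Omega_cl \<psi> = {p. snd p \<ge> \<psi> (fst p)}"

definition Theta :: "real \<Rightarrow> (real \<Rightarrow> real) \<Rightarrow> real \<times> real \<Rightarrow> real" where
  "Theta \<alpha> \<psi> p = (if snd p = \<psi> (fst p) then \<alpha> else 1)"

definition admissible :: "(real \<Rightarrow> real) \<Rightarrow> (real \<Rightarrow> real \<times> real) \<Rightarrow> bool" where
  "admissible \<psi> \<gamma> \<longleftrightarrow>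
     H2_curve \<gamma> \<and>
     (\<forall>t\<in>{0..1}. norm (dcurve \<gamma> t) > 0) \<and>
     (\<forall>t\<in>{0..1}. \<gamma> t \<in> Omega_cl \<psi>) \<and>
     fst (\<gamma> 0) = 0 \<and> fst (\<gamma> 1) = 1 \<and> snd (\<gamma> 0) = snd (\<gamma> 1) \<and>
     dcurve \<gamma> 0 = dcurve \<gamma> 1"

text \<open>Energy E[gamma] = int_0^L (eps^2 |gamma_ss|^2 + Theta(gamma)) ds, written in the
  parameter t via ds = |gamma'| dt and
  |gamma_ss|^2 = (|gamma''|^2 - (gamma''.gamma')^2/|gamma'|^2) / |gamma'|^4.\<close>
definition energy :: "real \<Rightarrow> real \<Rightarrow> (real \<Rightarrow> real) \<Rightarrow> (real \<Rightarrow> real \<times> real) \<Rightarrow> real" where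
  "energy \<epsilon> \<alpha> \<psi> \<gamma> = integral {0..1} (\<lambda>t.
      (let v = dcurve \<gamma> t; a = ddcurve \<gamma> t;
           curv2 = ((norm a)\<^sup>2 - (inner a v)\<^sup>2 / (norm v)\<^sup>2) / (norm v) ^ 4
       in (\<epsilon>\<^sup>2 * curv2 + Theta \<alpha> \<psi> (\<gamma> t)) * norm v))"

definition minimizer :: "real \<Rightarrow> real \<Rightarrow> (real \<Rightarrow> real) \<Rightarrow> (real \<Rightarrow> real \<times> real) \<Rightarrow> bool" where
  "minimizer \<epsilon> \<alpha> \<psi> \<gamma> \<longleftrightarrow>
     admissible \<psi> \<gamma> \<and> energy \<epsilon> \<alpha> \<psi> \<gamma> = Inf (energy \<epsilon> \<alpha> \<psi> ` {c. admissible \<psi> c})"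

definition graph_curve :: "(real \<Rightarrow> real) \<Rightarrow> (real \<Rightarrow> real \<times> real) \<Rightarrow> bool" where
  "graph_curve \<psi> \<gamma> \<longleftrightarrow> admissible \<psi> \<gamma> \<and> (\<forall>t\<in>{0..1}. fst (dcurve \<gamma> t) > 0)"

end

theory Submission
  imports Defs
begin

text \<open>If a minimizer \<open>\<gamma>\<close> is not a graph curve, its velocity \<open>v = \<gamma>'\<close> points into the closed
  left half-plane at some time. Since \<open>v\<close> is periodic with mean \<open>(1, 0)\<close>, the tangent then
  turns by at least \<open>\<pi>\<close>, so the total curvature is at least \<open>\<pi>\<close>, and by Cauchy-Schwarz the
  bending energy \<open>\<integral> \<kappa>\<^sup>2 ds\<close> is at least \<open>\<pi>\<^sup>2 / L\<close>, where \<open>L \<ge> 1\<close> is the length. Hence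
  \<open>E[\<gamma>] \<ge> \<epsilon>\<^sup>2 \<pi>\<^sup>2 / L + \<alpha> L\<close>. On the other hand, the horizontal line above \<open>\<psi>\<close> has energy at
  most \<open>1\<close>, and under the bound on \<open>\<psi>''\<close> the graph of \<open>\<psi>\<close> has energy at most
  \<open>\<alpha> + \<pi>\<^sup>2 \<alpha> \<epsilon>\<^sup>2\<close>: if \<open>\<alpha> L \<ge> 1\<close> the first bound is violated, otherwise \<open>L < 1 / \<alpha>\<close> and
  the second is. As \<open>v'\<close> exists only almost everywhere, the tangent angle is obtained by
  writing \<open>v\<close>, as a complex function, in the form \<open>v(t) = v(0) exp (\<integral>\<^sub>0\<^sup>t v' / v)\<close>.\<close>

section \<open>Turning of absolutely continuous plane curves\<close>

lemma norm_diff_le_if_local_increments_le: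
  fixes F :: "real \<Rightarrow> 'a::real_normed_vector" and K :: "real \<Rightarrow> real"
  assumes ab: "a \<le> b" and \<delta>: "\<delta> > 0"
    and local_bound: "\<And>s t. a \<le> s \<Longrightarrow> s \<le> t \<Longrightarrow> t \<le> b \<Longrightarrow> t - s < \<delta> \<Longrightarrow>
                        norm (F t - F s) \<le> \<eta> * (K t - K s)"
  shows "norm (F b - F a) \<le> \<eta> * (K b - K a)"
proof -
  define n :: nat where "n = Suc (nat \<lceil>(b - a) / \<delta>\<rceil>)"
  define h where "h = (b - a) / real n"
  have n_pos: "real n > 0" by (simp add: n_def)
  have "(b - a) / \<delta> < real n" unfolding n_def by linarith
  then have h_lt: "h < \<delta>" using \<delta> n_pos by (simp add: h_def field_simps)
  have h_nonneg: "h \<ge> 0" using ab n_pos by (simp add: h_def)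
  have h_n: "a + real n * h = b" using n_pos by (simp add: h_def)
  have "k \<le> n \<longrightarrow> norm (F (a + real k * h) - F a) \<le> \<eta> * (K (a + real k * h) - K a)" for k
  proof (induction k)
    case 0
    then show ?case by simp
  next
    case (Suc k)
    show ?case
    proof
      assume k: "Suc k \<le> n"
      let ?s = "a + real k * h" and ?t = "a + real (Suc k) * h"
      have "?t \<le> a + real n * h" using k h_nonneg by (intro add_left_mono mult_right_mono) auto
      then have "norm (F ?t - F ?s) \<le> \<eta> * (K ?t - K ?s)"
        using local_bound h_nonneg h_lt h_n by (simp add: algebra_simps)
      moreover have "norm (F ?s - F a) \<le> \<eta> * (K ?s - K a)" using Suc k by simp
      moreover have "norm (F ?t - F a) \<le> norm (F ?t - F ?s) + norm (F ?s - F a)"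
        using norm_triangle_ineq[of "F ?t - F ?s" "F ?s - F a"] by simp
      ultimately show "norm (F ?t - F a) \<le> \<eta> * (K ?t - K a)"
        by (simp add: algebra_simps)
    qed
  qed
  then show ?thesis using h_n by (metis order_refl)
qed

lemma eq_if_increments_dominated:
  fixes F :: "real \<Rightarrow> 'a::real_normed_vector" and K :: "real \<Rightarrow> real"
  assumes ab: "a \<le> b"
    and K_mono: "\<And>s t. a \<le> s \<Longrightarrow> s \<le> t \<Longrightarrow> t \<le> b \<Longrightarrow> K s \<le> K t"
    and local_bound: "\<And>\<eta>. \<eta> > 0 \<Longrightarrow> \<exists>\<delta>>0. \<forall>s t. a \<le> s \<longrightarrow> s \<le> t \<longrightarrow> t \<le> b \<longrightarrow> t - s < \<delta>
                  \<longrightarrow> norm (F t - F s) \<le> \<eta> * (K t - K s)"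
  shows "F b = F a"
proof -
  have K_ab: "K b - K a \<ge> 0" using K_mono[of a b] ab by simp
  have "norm (F b - F a) \<le> e" if "e > 0" for e
  proof -
    have "e / (K b - K a + 1) > 0" using that K_ab by simp
    then have "norm (F b - F a) \<le> (e / (K b - K a + 1)) * (K b - K a)"
      using local_bound norm_diff_le_if_local_increments_le[OF ab] by meson
    also have "\<dots> \<le> e" using K_ab that by (simp add: field_simps)
    finally show ?thesis .
  qed
  then show ?thesis by (metis dense_ge eq_iff_diff_eq_0 norm_le_zero_iff)
qed

lemma one_sided_averages_ae:
  fixes f :: "real \<Rightarrow> 'b::euclidean_space"
  assumes f: "\<And>c d. f integrable_on {c..d}"
  obtains N where "negligible N"
    "\<And>x e. x \<notin> N \<Longrightarrow> 0 < e \<Longrightarrow> \<exists>d>0. \<forall>h. 0 < h \<and> h < d \<longrightarrow>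
       norm (integral {x..x+h} f /\<^sub>R h - f x) < e \<and> norm (integral {x-h..x} f /\<^sub>R h - f x) < e"
proof -
  have right_averages: "\<exists>N. negligible N \<and> (\<forall>x e. x \<notin> N \<and> 0 < e \<longrightarrow>
      (\<exists>d>0. \<forall>h. 0 < h \<and> h < d \<longrightarrow> norm (integral {x..x+h} F /\<^sub>R h - F x) < e))"
    if "\<And>c d. F integrable_on {c..d}" for F :: "real \<Rightarrow> 'b"
  proof -
    have "F integrable_on cbox c d" for c d using that[of c d] by (simp add: cbox_interval)
    then obtain N where "negligible N" "\<And>x e. \<lbrakk>x \<notin> N; 0 < e\<rbrakk> \<Longrightarrow> \<exists>d>0. \<forall>h. 0 < h \<and> h < d \<longrightarrow>
        norm (integral (cbox x (x + h *\<^sub>R One)) F /\<^sub>R h ^ DIM(real) - F x) < e"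
      using integrable_ccontinuous_explicit[of F] by blast
    then show ?thesis by (intro exI[of _ N]) (simp add: cbox_interval)
  qed
  define f' where "f' x = f (-x)" for x
  have "f' integrable_on {c..d}" for c d
    using Henstock_Kurzweil_Integration.integrable_reflect_real[where f=f and a="-d" and b="-c"]
      f[of "-d" "-c"]
    unfolding f'_def minus_minus by blast
  then obtain N1 N2 where N: "negligible N1" "negligible N2"
    and right: "\<And>x e. \<lbrakk>x \<notin> N1; 0 < e\<rbrakk> \<Longrightarrow> \<exists>d>0. \<forall>h. 0 < h \<and> h < d \<longrightarrow>
         norm (integral {x..x+h} f /\<^sub>R h - f x) < e"
    and left: "\<And>x e. \<lbrakk>x \<notin> N2; 0 < e\<rbrakk> \<Longrightarrow> \<exists>d>0. \<forall>h. 0 < h \<and> h < d \<longrightarrow>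
         norm (integral {x..x+h} f' /\<^sub>R h - f' x) < e"
    using right_averages[OF f] right_averages[of f'] by metis
  have "negligible (N1 \<union> uminus ` N2)"
  proof (rule negligible_Un[OF N(1)])
    show "negligible (uminus ` N2)"
      by (rule negligible_differentiable_image_negligible[OF _ N(2)])
         (auto intro: derivative_intros simp: differentiable_on_def)
  qed
  moreover have "\<exists>d>0. \<forall>h. 0 < h \<and> h < d \<longrightarrow>
       norm (integral {x..x+h} f /\<^sub>R h - f x) < e \<and> norm (integral {x-h..x} f /\<^sub>R h - f x) < e"
    if "x \<notin> N1 \<union> uminus ` N2" "0 < e" for x e
  proof -
    have "x \<notin> N1" "-x \<notin> N2" using that(1) by (auto simp: image_iff)
    then obtain d1 d2 where "d1 > 0"
      "\<forall>h. 0 < h \<and> h < d1 \<longrightarrow> norm (integral {x..x+h} f /\<^sub>R h - f x) < e"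
      and "d2 > 0" "\<forall>h. 0 < h \<and> h < d2 \<longrightarrow> norm (integral {-x..-x+h} f' /\<^sub>R h - f' (-x)) < e"
      using right left \<open>0 < e\<close> by metis
    moreover have "integral {-x..-x+h} f' = integral {x-h..x} f" for h
      unfolding f'_def
      using Henstock_Kurzweil_Integration.integral_reflect_real[where f=f and a="x - h" and b=x]
      by simp
    ultimately show ?thesis
      by (intro exI[of _ "min d1 d2"]) (auto simp: f'_def)
  qed
  ultimately show ?thesis using that by blast
qed

lemma has_vector_derivative_indefinite_integral_if_averages:
  fixes g :: "real \<Rightarrow> 'b::banach"
  assumes g: "g integrable_on {a..b}" and t: "t \<in> {a<..<b}"
    and averages: "\<And>e. 0 < e \<Longrightarrow> \<exists>d>0. \<forall>h. 0 < h \<and> h < d \<longrightarrow>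
       norm (integral {t..t+h} g /\<^sub>R h - g t) < e \<and> norm (integral {t-h..t} g /\<^sub>R h - g t) < e"
  shows "((\<lambda>s. integral {a..s} g) has_vector_derivative g t) (at t)"
  unfolding has_vector_derivative_def has_derivative_at_alt
proof (intro conjI allI impI)
  show "bounded_linear (\<lambda>h. h *\<^sub>R g t)" by (rule bounded_linear_scaleR_left)
  fix e :: real assume "e > 0"
  then obtain d0 where d0: "d0 > 0" "\<forall>h. 0 < h \<and> h < d0 \<longrightarrow>
       norm (integral {t..t+h} g /\<^sub>R h - g t) < e \<and> norm (integral {t-h..t} g /\<^sub>R h - g t) < e"
    using averages by blast
  have scale: "norm (X - h *\<^sub>R g t) = h * norm (X /\<^sub>R h - g t)" if "h > 0" for X h
  proof -
    have "X - h *\<^sub>R g t = h *\<^sub>R (X /\<^sub>R h - g t)" using that by (simp add: algebra_simps)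
    then show ?thesis using that by simp
  qed
  have increment: "integral {a..y} g - integral {a..x} g = integral {x..y} g"
    if "a \<le> x" "x \<le> y" "y \<le> b" for x y
    using Henstock_Kurzweil_Integration.integral_combine[where a=a and c=x and b=y and f=g]
      integrable_on_subinterval[OF g, of a y] that
    by (simp add: algebra_simps)
  define d where "d = min d0 (min (t - a) (b - t))"
  show "\<exists>d>0. \<forall>y. norm (y - t) < d \<longrightarrow>
        norm (integral {a..y} g - integral {a..t} g - (y - t) *\<^sub>R g t) \<le> e * norm (y - t)"
  proof (intro exI[of _ d] conjI allI impI)
    show "d > 0" using d0 t by (simp add: d_def)
    fix y assume y: "norm (y - t) < d"
    consider "t < y" | "y = t" | "y < t" by linarith
    then show "norm (integral {a..y} g - integral {a..t} g - (y - t) *\<^sub>R g t) \<le> e * norm (y - t)"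
    proof cases
      case 1
      then have "integral {a..y} g - integral {a..t} g = integral {t..t + (y - t)} g"
        using increment[of t y] t y by (simp add: d_def)
      then show ?thesis
        using scale[of "y - t" "integral {t..t + (y - t)} g"] d0(2)[rule_format, of "y - t"] 1 y
        by (simp add: d_def)
    next
      case 2
      then show ?thesis by simp
    next
      case 3
      then have "integral {a..y} g - integral {a..t} g - (y - t) *\<^sub>R g t
          = - (integral {t - (t - y)..t} g - (t - y) *\<^sub>R g t)"
        using increment[of y t] t y by (simp add: d_def algebra_simps)
      then show ?thesis
        using scale[of "t - y" "integral {t - (t - y)..t} g"] d0(2)[rule_format, of "t - y"] 3 y
        by (simp add: d_def dist_norm norm_minus_commute)
    qed
  qed
qed

lemma indefinite_integral_has_vector_derivative_ae:
  fixes g :: "real \<Rightarrow> 'b::euclidean_space"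
  assumes g: "g integrable_on {a..b}"
  obtains N where "negligible N"
    "\<And>t. t \<in> {a<..<b} \<Longrightarrow> t \<notin> N \<Longrightarrow> ((\<lambda>s. integral {a..s} g) has_vector_derivative g t) (at t)"
proof -
  define f where "f x = (if x \<in> {a..b} then g x else 0)" for x
  have "f integrable_on {c..d}" for c d
    using integrable_on_subinterval[of f UNIV] g unfolding f_def integrable_restrict_UNIV by auto
  then obtain N where N: "negligible N"
    "\<And>x e. x \<notin> N \<Longrightarrow> 0 < e \<Longrightarrow> \<exists>d>0. \<forall>h. 0 < h \<and> h < d \<longrightarrow>
       norm (integral {x..x+h} f /\<^sub>R h - f x) < e \<and> norm (integral {x-h..x} f /\<^sub>R h - f x) < e"
    using one_sided_averages_ae by metis
  have "((\<lambda>s. integral {a..s} g) has_vector_derivative g t) (at t)"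
    if t: "t \<in> {a<..<b}" "t \<notin> N" for t
  proof (rule has_vector_derivative_indefinite_integral_if_averages[OF g t(1)])
    fix e :: real assume "0 < e"
    then obtain d where d: "d > 0" "\<forall>h. 0 < h \<and> h < d \<longrightarrow>
       norm (integral {t..t+h} f /\<^sub>R h - f t) < e \<and> norm (integral {t-h..t} f /\<^sub>R h - f t) < e"
      using N(2) t(2) by blast
    have "integral {t..t+h} f = integral {t..t+h} g" "integral {t-h..t} f = integral {t-h..t} g"
      if "h < min (t - a) (b - t)" for h
      using that by (auto simp: f_def intro!: integral_cong)
    then show "\<exists>d>0. \<forall>h. 0 < h \<and> h < d \<longrightarrow>
       norm (integral {t..t+h} g /\<^sub>R h - g t) < e \<and> norm (integral {t-h..t} g /\<^sub>R h - g t) < e"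
      using d t(1) by (intro exI[of _ "min d (min (t - a) (b - t))"]) (auto simp: f_def)
  qed
  then show ?thesis using that N(1) by blast
qed

lemma norm_exp_minus_one_bounds:
  fixes z :: complex
  assumes "norm z \<le> k" "k \<le> 1"
  shows "norm (exp z - 1) \<le> 3 * k" and "norm (exp z - 1 - z) \<le> 3 * k\<^sup>2"
proof -
  have "exp (norm z) \<le> exp 1" using assms by simp
  then have exp_z: "exp (norm z) \<le> 3" using exp_le by linarith
  have "norm (exp z - 1) \<le> exp (norm z) * norm z"
    using Taylor_exp_field[of z 0] by simp
  also have "\<dots> \<le> 3 * k" using exp_z assms(1) by (intro mult_mono) auto
  finally show "norm (exp z - 1) \<le> 3 * k" .
  have "norm (exp z - 1 - z) \<le> exp (norm z) * (norm z)\<^sup>2"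
    using Taylor_exp_field[of z 1] by (simp add: numeral_2_eq_2 diff_diff_eq)
  also have "\<dots> \<le> 3 * k\<^sup>2" using exp_z assms(1) by (intro mult_mono power_mono) auto
  finally show "norm (exp z - 1 - z) \<le> 3 * k\<^sup>2" .
qed

lemma absolutely_integrable_on_divide_continuous:
  fixes V G :: "real \<Rightarrow> complex"
  assumes S: "compact S" and V: "continuous_on S V" "\<And>t. t \<in> S \<Longrightarrow> V t \<noteq> 0"
    and G: "G absolutely_integrable_on S"
  shows "(\<lambda>r. G r / V r) absolutely_integrable_on S"
proof -
  have V_inv: "continuous_on S (\<lambda>r. inverse (V r))"
    using V by (intro continuous_on_inverse) auto
  have "(\<lambda>r. inverse (V r) * G r) absolutely_integrable_on S"
  proof (rule absolutely_integrable_bounded_measurable_product[OF bilinear_times _ _ _ G])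
    show "(\<lambda>r. inverse (V r)) \<in> borel_measurable (lebesgue_on S)"
      using continuous_imp_measurable_on_sets_lebesgue[OF V_inv] S by (simp add: compact_imp_closed)
    show "bounded ((\<lambda>r. inverse (V r)) ` S)"
      using compact_continuous_image[OF V_inv S] by (rule compact_imp_bounded)
  qed (use S in \<open>simp add: compact_imp_closed\<close>)
  then show ?thesis by (simp add: divide_inverse mult.commute)
qed

lemma norm_mult_exp_integral_minus_le:
  fixes V \<mu> :: "real \<Rightarrow> complex" and s t :: real
  defines "\<kappa> \<equiv> integral {s..t} (\<lambda>r. norm (\<mu> r))"
  assumes \<mu>: "\<mu> integrable_on {s..t}" "(\<lambda>r. norm (\<mu> r)) integrable_on {s..t}"
    and V\<mu>: "(\<lambda>r. V r * \<mu> r) integrable_on {s..t}"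
    and V_increment: "V t - V s = integral {s..t} (\<lambda>r. V r * \<mu> r)"
    and st: "s \<le> t" and V_bound: "\<And>r. r \<in> {s..t} \<Longrightarrow> norm (V r) \<le> C"
    and V_osc: "\<And>r. r \<in> {s..t} \<Longrightarrow> norm (V r - V s) \<le> \<rho>"
    and \<kappa>_le_1: "\<kappa> \<le> 1"
  shows "norm (V t * exp (- integral {s..t} \<mu>) - V s) \<le> \<kappa> * (6 * C * \<kappa> + \<rho>)"
proof -
  define \<zeta> where "\<zeta> = integral {s..t} \<mu>"
  define e where "e = exp (- \<zeta>)"
  have \<kappa>_nonneg: "0 \<le> \<kappa>" unfolding \<kappa>_def by (rule integral_nonneg[OF \<mu>(2)]) simp
  have C: "0 \<le> C" using V_bound[of s] st
    by (meson atLeastAtMost_iff norm_ge_zero order.trans order_refl)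
  have "norm (- \<zeta>) \<le> \<kappa>"
    unfolding \<zeta>_def \<kappa>_def norm_minus_cancel by (rule integral_norm_bound_integral[OF \<mu>]) simp
  note exp_bounds = norm_exp_minus_one_bounds[OF this \<kappa>_le_1, folded e_def]
  have pointwise: "norm ((e * V r - V s) * \<mu> r) \<le> (3 * \<kappa> * C + \<rho>) * norm (\<mu> r)"
    if r: "r \<in> {s..t}" for r
  proof -
    have "e * V r - V s = (e - 1) * V r + (V r - V s)" by (simp add: algebra_simps)
    then have "norm (e * V r - V s) \<le> norm (e - 1) * norm (V r) + norm (V r - V s)"
      by (metis norm_mult norm_triangle_ineq)
    also have "\<dots> \<le> 3 * \<kappa> * C + \<rho>"
      using exp_bounds(1) V_bound[OF r] V_osc[OF r] \<kappa>_nonneg by (intro add_mono mult_mono) auto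
    finally show ?thesis by (simp add: norm_mult mult_right_mono)
  qed
  have "integral {s..t} (\<lambda>r. (e * V r - V s) * \<mu> r)
        = e * integral {s..t} (\<lambda>r. V r * \<mu> r) - V s * integral {s..t} \<mu>"
    using V\<mu> \<mu>(1)
    by (simp add: algebra_simps integral_diff integrable_on_mult_right flip: integral_mult_right)
  then have decomposition: "V t * e - V s
      = V s * (e - 1 + \<zeta>) + integral {s..t} (\<lambda>r. (e * V r - V s) * \<mu> r)"
    using V_increment by (simp add: \<zeta>_def algebra_simps)
  have "norm (integral {s..t} (\<lambda>r. (e * V r - V s) * \<mu> r))
        \<le> integral {s..t} (\<lambda>r. (3 * \<kappa> * C + \<rho>) * norm (\<mu> r))"
  proof (rule integral_norm_bound_integral)
    show "(\<lambda>r. (e * V r - V s) * \<mu> r) integrable_on {s..t}"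
      using V\<mu> \<mu>(1) by (simp add: algebra_simps integrable_diff integrable_on_mult_right)
  qed (use \<mu>(2) pointwise in \<open>auto intro: integrable_on_mult_right\<close>)
  also have "\<dots> = (3 * \<kappa> * C + \<rho>) * \<kappa>" by (simp add: \<kappa>_def)
  finally have "norm (integral {s..t} (\<lambda>r. (e * V r - V s) * \<mu> r)) \<le> (3 * \<kappa> * C + \<rho>) * \<kappa>" .
  moreover have "norm (V s * (e - 1 + \<zeta>)) \<le> C * (3 * \<kappa>\<^sup>2)"
    unfolding norm_mult using exp_bounds(2) V_bound[of s] st C by (intro mult_mono) auto
  ultimately have "norm (V t * e - V s) \<le> C * (3 * \<kappa>\<^sup>2) + (3 * \<kappa> * C + \<rho>) * \<kappa>"
    unfolding decomposition by (meson add_mono norm_triangle_ineq order_trans)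
  then show ?thesis by (simp add: e_def \<zeta>_def power2_eq_square algebra_simps)
qed

text \<open>\<open>V\<close> is differentiable only almost everywhere, so rather than showing that
  \<open>V t * exp (- integral {a..t} \<mu>)\<close> has derivative zero we show that its increments are
  small compared with those of \<open>integral {a..t} (\<lambda>r. norm (\<mu> r))\<close>.\<close>

lemma mult_exp_integral_increment_small:
  fixes V \<mu> :: "real \<Rightarrow> complex"
  assumes V_cont: "continuous_on {a..b} V" and \<mu>: "\<mu> absolutely_integrable_on {a..b}"
    and V\<mu>: "(\<lambda>r. V r * \<mu> r) integrable_on {a..b}"
    and V_increment: "\<And>s t. a \<le> s \<Longrightarrow> s \<le> t \<Longrightarrow> t \<le> b \<Longrightarrow>
                        V t - V s = integral {s..t} (\<lambda>r. V r * \<mu> r)"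
    and \<eta>: "\<eta> > 0"
  obtains \<delta> where "\<delta> > 0" "\<And>s t. a \<le> s \<Longrightarrow> s \<le> t \<Longrightarrow> t \<le> b \<Longrightarrow> t - s < \<delta> \<Longrightarrow>
    norm (V t * exp (- integral {s..t} \<mu>) - V s) \<le> \<eta> * integral {s..t} (\<lambda>r. norm (\<mu> r))"
proof -
  have \<mu>_int: "\<mu> integrable_on {s..t}" "(\<lambda>r. norm (\<mu> r)) integrable_on {s..t}"
    if "a \<le> s" "t \<le> b" for s t
    using integrable_on_subinterval[OF set_lebesgue_integral_eq_integral(1)[OF \<mu>]]
      integrable_on_subinterval[OF absolutely_integrable_on_def[THEN iffD1, OF \<mu>, THEN conjunct2]]
      that by auto
  define K where "K t = integral {a..t} (\<lambda>r. norm (\<mu> r))" for t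
  have K_increment: "K t - K s = integral {s..t} (\<lambda>r. norm (\<mu> r))"
    if "a \<le> s" "s \<le> t" "t \<le> b" for s t
    using Henstock_Kurzweil_Integration.integral_combine[where a=a and c=s and b=t and
      f="\<lambda>r. norm (\<mu> r)"]
      \<mu>_int(2)[of a t] that by (simp add: K_def algebra_simps)
  obtain C where C: "C > 0" "\<And>r. r \<in> {a..b} \<Longrightarrow> norm (V r) \<le> C"
    using compact_imp_bounded[OF compact_continuous_image[OF V_cont]] unfolding bounded_pos by auto
  define \<kappa>0 where "\<kappa>0 = min 1 (\<eta> / (12 * C))"
  have \<kappa>0: "\<kappa>0 > 0" "\<kappa>0 \<le> 1" "6 * C * \<kappa>0 \<le> \<eta> / 2"
    using \<eta> C by (auto simp: \<kappa>0_def field_simps min_def)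
  have "uniformly_continuous_on {a..b} K"
    unfolding K_def
    by (rule compact_uniformly_continuous[OF indefinite_integral_continuous_1]) (use \<mu>_int in auto)
  then obtain \<delta>1 where \<delta>1: "\<delta>1 > 0"
    "\<And>s t. s \<in> {a..b} \<Longrightarrow> t \<in> {a..b} \<Longrightarrow> dist t s < \<delta>1 \<Longrightarrow> dist (K t) (K s) < \<kappa>0"
    using \<kappa>0(1) unfolding uniformly_continuous_on_def by metis
  have "uniformly_continuous_on {a..b} V"
    by (rule compact_uniformly_continuous[OF V_cont]) auto
  moreover have "\<eta> / 2 > 0" using \<eta> by simp
  ultimately obtain \<delta>2 where \<delta>2: "\<delta>2 > 0"
    "\<And>s t. s \<in> {a..b} \<Longrightarrow> t \<in> {a..b} \<Longrightarrow> dist t s < \<delta>2 \<Longrightarrow> dist (V t) (V s) < \<eta> / 2"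
    unfolding uniformly_continuous_on_def by metis
  show ?thesis
  proof (rule that[of "min \<delta>1 \<delta>2"])
    show "min \<delta>1 \<delta>2 > 0" using \<delta>1 \<delta>2 by simp
    fix s t assume s: "a \<le> s" and st: "s \<le> t" and t: "t \<le> b" and close: "t - s < min \<delta>1 \<delta>2"
    define \<kappa> where "\<kappa> = integral {s..t} (\<lambda>r. norm (\<mu> r))"
    have \<kappa>: "0 \<le> \<kappa>" "\<kappa> < \<kappa>0"
      using integral_nonneg[OF \<mu>_int(2)[OF s t]] \<delta>1(2)[of s t] K_increment[OF s st t] s st t close
      by (auto simp: \<kappa>_def dist_real_def)
    have "norm (V t * exp (- integral {s..t} \<mu>) - V s) \<le> \<kappa> * (6 * C * \<kappa> + \<eta> / 2)"
      unfolding \<kappa>_def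
    proof (rule norm_mult_exp_integral_minus_le[OF \<mu>_int[OF s t] _ V_increment[OF s st t] st])
      show "(\<lambda>r. V r * \<mu> r) integrable_on {s..t}"
        using integrable_on_subinterval[OF V\<mu>] s t by auto
      show "norm (V r - V s) \<le> \<eta> / 2" if "r \<in> {s..t}" for r
        using \<delta>2(2)[of r s] that s t close
          by (auto simp: dist_norm dist_real_def norm_minus_commute)
    qed (use C \<kappa> \<kappa>0 s t in \<open>auto simp: \<kappa>_def\<close>)
    also have "\<dots> \<le> \<kappa> * \<eta>"
    proof (rule mult_left_mono[OF _ \<kappa>(1)])
      have "6 * C * \<kappa> \<le> 6 * C * \<kappa>0" using \<kappa> C by (intro mult_left_mono) auto
      then show "6 * C * \<kappa> + \<eta> / 2 \<le> \<eta>" using \<kappa>0 by linarith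
    qed
    finally show "norm (V t * exp (- integral {s..t} \<mu>) - V s) \<le> \<eta> * \<kappa>"
      by (simp add: mult.commute)
  qed
qed

lemma eq_mult_exp_integral_log_derivative:
  fixes V G :: "real \<Rightarrow> complex"
  assumes V_cont: "continuous_on {a..b} V" and V_nz: "\<And>t. t \<in> {a..b} \<Longrightarrow> V t \<noteq> 0"
    and G: "G absolutely_integrable_on {a..b}"
    and V_G: "\<And>t. t \<in> {a..b} \<Longrightarrow> V t = V a + integral {a..t} G"
    and t0: "t0 \<in> {a..b}"
  shows "V t0 = V a * exp (integral {a..t0} (\<lambda>r. G r / V r))"
proof -
  define \<mu> where "\<mu> r = G r / V r" for r
  have \<mu>: "\<mu> absolutely_integrable_on {a..b}"
    unfolding \<mu>_def using absolutely_integrable_on_divide_continuous[OF compact_Icc V_cont V_nz G] .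
  have \<mu>_int: "\<mu> integrable_on {s..t}" "(\<lambda>r. norm (\<mu> r)) integrable_on {s..t}"
    if "a \<le> s" "t \<le> b" for s t
    using integrable_on_subinterval[OF set_lebesgue_integral_eq_integral(1)[OF \<mu>]]
      integrable_on_subinterval[OF absolutely_integrable_on_def[THEN iffD1, OF \<mu>, THEN conjunct2]]
      that by auto
  have G_int: "G integrable_on {a..b}" using set_lebesgue_integral_eq_integral(1)[OF G] .
  have G_\<mu>: "G r = V r * \<mu> r" if "r \<in> {a..b}" for r using V_nz[OF that] by (simp add: \<mu>_def)
  have V\<mu>: "(\<lambda>r. V r * \<mu> r) integrable_on {a..b}"
    using G_int by (rule integrable_eq) (use G_\<mu> in auto)
  have increment: "integral {a..t} f - integral {a..s} f = integral {s..t} f"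
    if "a \<le> s" "s \<le> t" "f integrable_on {a..t}" for f :: "real \<Rightarrow> 'c::banach" and s t
    using Henstock_Kurzweil_Integration.integral_combine[where a=a and c=s and b=t and f=f] that
    by (simp add: algebra_simps)
  have V_increment: "V t - V s = integral {s..t} (\<lambda>r. V r * \<mu> r)"
    if "a \<le> s" "s \<le> t" "t \<le> b" for s t
  proof -
    have "V t - V s = integral {s..t} G"
      using V_G[of t] V_G[of s] increment[of s t G] integrable_on_subinterval[OF G_int, of a t] that
      by simp
    also have "\<dots> = integral {s..t} (\<lambda>r. V r * \<mu> r)"
      by (rule integral_cong) (use G_\<mu> that in auto)
    finally show ?thesis .
  qed
  define Z where "Z t = integral {a..t} \<mu>" for t
  define K where "K t = integral {a..t} (\<lambda>r. norm (\<mu> r))" for t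
  define CZ where "CZ = exp (K b)"
  have K_increment: "K t - K s = integral {s..t} (\<lambda>r. norm (\<mu> r))"
    if "a \<le> s" "s \<le> t" "t \<le> b" for s t
    using increment[of s t] \<mu>_int[of a t] that by (simp add: K_def)
  have K_mono: "K s \<le> K t" if "a \<le> s" "s \<le> t" "t \<le> b" for s t
    using K_increment[OF that] integral_nonneg[OF \<mu>_int(2)[of s t]] that by simp
  have exp_Z: "norm (exp (- Z s)) \<le> CZ" if "a \<le> s" "s \<le> b" for s
  proof -
    have "norm (Z s) \<le> K s"
      unfolding Z_def K_def by (rule integral_norm_bound_integral) (use \<mu>_int that in auto)
    then have "norm (Z s) \<le> K b" using K_mono[of s b] that by simp
    then show ?thesis using abs_Re_le_cmod[of "Z s"] by (simp add: CZ_def)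
  qed
  define F where "F t = V t * exp (- Z t)" for t
  have "F t0 = F a"
  proof (rule eq_if_increments_dominated[where K=K])
    fix \<eta> :: real assume "\<eta> > 0"
    then obtain \<delta> where \<delta>: "\<delta> > 0" "\<And>s t. a \<le> s \<Longrightarrow> s \<le> t \<Longrightarrow> t \<le> b \<Longrightarrow> t - s < \<delta> \<Longrightarrow>
        norm (V t * exp (- integral {s..t} \<mu>) - V s) \<le> \<eta> / CZ * integral {s..t} (\<lambda>r. norm (\<mu> r))"
      using mult_exp_integral_increment_small[OF V_cont \<mu> V\<mu> V_increment, of "\<eta> / CZ"]
      by (auto simp: CZ_def)
    show "\<exists>\<delta>>0. \<forall>s t. a \<le> s \<longrightarrow> s \<le> t \<longrightarrow> t \<le> t0 \<longrightarrow> t - s < \<delta>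
          \<longrightarrow> norm (F t - F s) \<le> \<eta> * (K t - K s)"
    proof (intro exI[of _ \<delta>] conjI allI impI \<delta>(1))
      fix s t assume s: "a \<le> s" and st: "s \<le> t" and t: "t \<le> t0" and close: "t - s < \<delta>"
      have tb: "t \<le> b" using t t0 by simp
      have "Z t - Z s = integral {s..t} \<mu>"
        using increment[of s t \<mu>] \<mu>_int[of a t] s st tb by (simp add: Z_def)
      then have "F t - F s = exp (- Z s) * (V t * exp (- integral {s..t} \<mu>) - V s)"
        unfolding F_def by (simp add: algebra_simps flip: exp_add)
      then have "norm (F t - F s)
          = norm (exp (- Z s)) * norm (V t * exp (- integral {s..t} \<mu>) - V s)"
        by (simp add: norm_mult)
      also have "\<dots> \<le> CZ * (\<eta> / CZ * (K t - K s))"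
        using exp_Z[of s] \<delta>(2)[OF s st tb close] K_increment[OF s st tb] s st tb
        by (intro mult_mono) (auto simp: CZ_def)
      finally show "norm (F t - F s) \<le> \<eta> * (K t - K s)" by (simp add: CZ_def)
    qed
  qed (use t0 K_mono in auto)
  then have "V t0 = V a * exp (Z t0)"
    by (simp add: F_def Z_def exp_minus field_simps)
  then show ?thesis by (simp add: Z_def \<mu>_def[abs_def])
qed

lemma exists_Re_mult_nonpos_if_has_integral:
  fixes V :: "real \<Rightarrow> complex"
  assumes V: "continuous_on {a..b} V" and ab: "a < b"
    and V_int: "(V has_integral I) {a..b}" and I: "Re (I * c) \<le> 0"
  shows "\<exists>t\<in>{a..b}. Re (V t * c) \<le> 0"
proof -
  obtain t where t: "t \<in> {a..b}" "\<And>r. r \<in> {a..b} \<Longrightarrow> Re (V t * c) \<le> Re (V r * c)"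
    using continuous_attains_inf[OF compact_Icc _ continuous_on_Re[OF continuous_on_mult_right[OF V]]]
      ab by fastforce
  have "((\<lambda>r. Re (V t * c)) has_integral Re (V t * c) * (b - a)) {a..b}"
    using has_integral_const_real[of "Re (V t * c)" a b] ab by (simp add: mult.commute)
  moreover have "((\<lambda>r. Re (V r * c)) has_integral Re (I * c)) {a..b}"
    using has_integral_Re[OF has_integral_mult_left[OF V_int]] by simp
  ultimately have "Re (V t * c) * (b - a) \<le> Re (I * c)"
    using t(2) by (rule has_integral_le)
  then have "Re (V t * c) \<le> 0" using I ab mult_pos_pos[of "Re (V t * c)" "b - a"] by linarith
  then show ?thesis using t(1) by blast
qed

lemma pi_le_integral_abs_if_cos_nonpos:
  fixes \<omega> :: "real \<Rightarrow> real"
  assumes \<omega>: "\<omega> integrable_on {a..b}" "(\<lambda>r. \<bar>\<omega> r\<bar>) integrable_on {a..b}"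
    and closed: "cos (integral {a..b} \<omega>) = 1"
    and st: "a \<le> s" "s \<le> t" "t \<le> b" and turned: "cos (integral {s..t} \<omega>) \<le> 0"
  shows "pi \<le> integral {a..b} (\<lambda>r. \<bar>\<omega> r\<bar>)"
proof -
  have half_pi: "pi / 2 \<le> \<bar>x\<bar>" if "cos x \<le> 0" for x
    using cos_gt_zero_pi[of x] that by linarith
  have combine: "integral {x..z} f = integral {x..y} f + integral {y..z} f"
    if "x \<le> y" "y \<le> z" "f integrable_on {x..z}" for x y z and f :: "real \<Rightarrow> real"
    using Henstock_Kurzweil_Integration.integral_combine[where a=x and c=y and b=z and f=f] that
    by simp
  have sub: "\<omega> integrable_on {x..y}" "(\<lambda>r. \<bar>\<omega> r\<bar>) integrable_on {x..y}"
    if "a \<le> x" "y \<le> b" for x y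
    using integrable_on_subinterval[OF \<omega>(1)] integrable_on_subinterval[OF \<omega>(2)] that by auto
  have bound: "\<bar>integral {x..y} \<omega>\<bar> \<le> integral {x..y} (\<lambda>r. \<bar>\<omega> r\<bar>)" if "a \<le> x" "y \<le> b" for x y
    using integral_norm_bound_integral[OF sub[OF that]] by simp
  have split: "integral {a..b} f = integral {a..s} f + integral {s..t} f + integral {t..b} f"
    if "f integrable_on {a..b}" for f :: "real \<Rightarrow> real"
    using combine[of a t b f] combine[of a s t f] integrable_on_subinterval[OF that, of a t] that st
    by simp
  have "sin (integral {a..b} \<omega>) = 0"
    using closed sin_cos_squared_add[of "integral {a..b} \<omega>"] by simp
  then have "cos (integral {a..s} \<omega> + integral {t..b} \<omega>) = cos (integral {s..t} \<omega>)"
    using split[OF \<omega>(1)] closed cos_diff[of "integral {a..b} \<omega>" "integral {s..t} \<omega>"]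
    by (simp add: algebra_simps)
  then have "pi / 2 \<le> \<bar>integral {a..s} \<omega> + integral {t..b} \<omega>\<bar>" using half_pi turned by simp
  also have "\<dots> \<le> integral {a..s} (\<lambda>r. \<bar>\<omega> r\<bar>) + integral {t..b} (\<lambda>r. \<bar>\<omega> r\<bar>)"
    using bound[of a s] bound[of t b] st by linarith
  finally have "pi / 2 \<le> integral {a..s} (\<lambda>r. \<bar>\<omega> r\<bar>) + integral {t..b} (\<lambda>r. \<bar>\<omega> r\<bar>)" .
  moreover have "pi / 2 \<le> integral {s..t} (\<lambda>r. \<bar>\<omega> r\<bar>)"
    using half_pi[OF turned] bound[of s t] st by linarith
  ultimately show ?thesis using split[OF \<omega>(2)] by linarith
qed

lemma pi_le_integral_abs_if_cos_diff_nonpos: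
  fixes \<omega> :: "real \<Rightarrow> real"
  assumes \<omega>: "\<omega> integrable_on {a..b}" "(\<lambda>r. \<bar>\<omega> r\<bar>) integrable_on {a..b}"
    and closed: "cos (integral {a..b} \<omega>) = 1"
    and st: "s \<in> {a..b}" "t \<in> {a..b}"
    and turned: "cos (integral {a..t} \<omega> - integral {a..s} \<omega>) \<le> 0"
  shows "pi \<le> integral {a..b} (\<lambda>r. \<bar>\<omega> r\<bar>)"
proof -
  have increment: "integral {a..y} \<omega> - integral {a..x} \<omega> = integral {x..y} \<omega>"
    if "x \<in> {a..b}" "y \<in> {a..b}" "x \<le> y" for x y
    using Henstock_Kurzweil_Integration.integral_combine[where a=a and c=x and b=y and f=\<omega>]
      integrable_on_subinterval[OF \<omega>(1), of a y] that by auto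
  show ?thesis
  proof (cases "s \<le> t")
    case True
    then show ?thesis
      using pi_le_integral_abs_if_cos_nonpos[OF \<omega> closed, of s t] increment[of s t] st turned
      by auto
  next
    case False
    then show ?thesis
      using pi_le_integral_abs_if_cos_nonpos[OF \<omega> closed, of t s] increment[of t s] st turned
      by (auto simp: cos_minus[of "integral {a..t} \<omega> - integral {a..s} \<omega>", symmetric])
  qed
qed

lemma cos_Im_diff_nonpos_if_Re_mult_cnj_nonpos:
  fixes c z w :: complex
  assumes "c \<noteq> 0" "Re (c * exp z * cnj (c * exp w)) \<le> 0"
  shows "cos (Im z - Im w) \<le> 0"
proof -
  have "c * exp z * cnj (c * exp w) = of_real ((norm c)\<^sup>2) * exp (z + cnj w)"
    unfolding complex_norm_square by (simp add: exp_cnj exp_add algebra_simps)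
  then have "Re (c * exp z * cnj (c * exp w)) = (norm c)\<^sup>2 * exp (Re z + Re w) * cos (Im z - Im w)"
    by (simp add: Re_exp)
  then show ?thesis using assms by (simp add: mult_le_0_iff)
qed

lemma pi_le_total_turning:
  fixes V G :: "real \<Rightarrow> complex"
  assumes V_cont: "continuous_on {a..b} V" and V_nz: "\<And>t. t \<in> {a..b} \<Longrightarrow> V t \<noteq> 0"
    and G: "G absolutely_integrable_on {a..b}"
    and V_G: "\<And>t. t \<in> {a..b} \<Longrightarrow> V t = V a + integral {a..t} G"
    and closed: "V b = V a" and ab: "a < b" and V_int: "(V has_integral I) {a..b}"
    and t0: "t0 \<in> {a..b}" "Re (V t0 * cnj I) \<le> 0"
  shows "pi \<le> integral {a..b} (\<lambda>r. \<bar>Im (G r / V r)\<bar>)"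
proof -
  define \<mu> where "\<mu> r = G r / V r" for r
  define Z where "Z t = integral {a..t} \<mu>" for t
  have \<mu>_abs: "\<mu> absolutely_integrable_on {a..b}"
    unfolding \<mu>_def using absolutely_integrable_on_divide_continuous[OF compact_Icc V_cont V_nz G] .
  have "(\<lambda>r. Im (\<mu> r)) absolutely_integrable_on {a..b}"
    using absolutely_integrable_linear[OF \<mu>_abs bounded_linear_Im] by (simp add: o_def)
  then have \<omega>_int: "(\<lambda>r. Im (\<mu> r)) integrable_on {a..b}" "(\<lambda>r. \<bar>Im (\<mu> r)\<bar>) integrable_on {a..b}"
    unfolding absolutely_integrable_on_def by (auto simp: real_norm_def)
  have Im_Z: "Im (Z t) = integral {a..t} (\<lambda>r. Im (\<mu> r))" if "t \<in> {a..b}" for t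
  proof -
    have "\<mu> integrable_on {a..t}"
      using integrable_on_subinterval[OF set_lebesgue_integral_eq_integral(1)[OF \<mu>_abs]] that
      by auto
    from has_integral_Im[OF integrable_integral[OF this]] show ?thesis
      unfolding Z_def by (rule integral_unique[symmetric])
  qed
  have V_exp: "V t = V a * exp (Z t)" if "t \<in> {a..b}" for t
    using eq_mult_exp_integral_log_derivative[OF V_cont V_nz G V_G that]
      by (simp add: Z_def \<mu>_def[abs_def])
  have Va: "V a \<noteq> 0" using V_nz ab by simp
  obtain t1 where t1: "t1 \<in> {a..b}" "Re (V t1 * cnj (V t0)) \<le> 0"
    using exists_Re_mult_nonpos_if_has_integral[OF V_cont ab V_int, of "cnj (V t0)"] t0(2)
    by (auto simp: algebra_simps)
  have "cos (Im (Z t1) - Im (Z t0)) \<le> 0"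
    using t1(2) unfolding V_exp[OF t1(1)] V_exp[OF t0(1)]
    by (rule cos_Im_diff_nonpos_if_Re_mult_cnj_nonpos[OF Va])
  moreover have "V a * exp (Z b) = V a" using V_exp[of b] closed ab by simp
  then have "exp (Z b) = 1" using Va by simp
  then have "cos (Im (Z b)) = 1"
    using arg_cong[OF \<open>exp (Z b) = 1\<close>, of norm] by (simp add: complex_eq_iff Re_exp)
  ultimately have "pi \<le> integral {a..b} (\<lambda>r. \<bar>Im (\<mu> r)\<bar>)"
    using pi_le_integral_abs_if_cos_diff_nonpos[OF \<omega>_int _ t0(1) t1(1)] Im_Z ab t0(1) t1(1) by auto
  then show ?thesis by (simp add: \<mu>_def)
qed

section \<open>Curvature and competitors\<close>

text \<open>\<open>curvature_sq a v\<close> is the squared curvature \<open>|\<gamma>\<^sub>s\<^sub>s|\<^sup>2\<close> at a point with velocity \<open>v\<close>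
  and acceleration \<open>a\<close>; in arc length, \<open>bending \<gamma> = \<integral> |\<gamma>\<^sub>s\<^sub>s|\<^sup>2 ds\<close> and
  \<open>total_curvature \<gamma> = \<integral> |\<gamma>\<^sub>s\<^sub>s| ds\<close>.\<close>

definition curvature_sq :: "real \<times> real \<Rightarrow> real \<times> real \<Rightarrow> real" where
  "curvature_sq a v = ((norm a)\<^sup>2 - (inner a v)\<^sup>2 / (norm v)\<^sup>2) / (norm v) ^ 4"

definition curve_length :: "(real \<Rightarrow> real \<times> real) \<Rightarrow> real" where
  "curve_length \<gamma> = integral {0..1} (\<lambda>t. norm (dcurve \<gamma> t))"

definition bending :: "(real \<Rightarrow> real \<times> real) \<Rightarrow> real" where
  "bending \<gamma> = integral {0..1} (\<lambda>t. curvature_sq (ddcurve \<gamma> t) (dcurve \<gamma> t) * norm (dcurve \<gamma> t))"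

definition total_curvature :: "(real \<Rightarrow> real \<times> real) \<Rightarrow> real" where
  "total_curvature \<gamma> =
     integral {0..1} (\<lambda>t. sqrt (curvature_sq (ddcurve \<gamma> t) (dcurve \<gamma> t)) * norm (dcurve \<gamma> t))"

lemma energy_eq_integral_curvature_sq:
  "energy \<epsilon> \<alpha> \<psi> \<gamma> = integral {0..1} (\<lambda>t.
     (\<epsilon>\<^sup>2 * curvature_sq (ddcurve \<gamma> t) (dcurve \<gamma> t) + Theta \<alpha> \<psi> (\<gamma> t)) * norm (dcurve \<gamma> t))"
  by (simp add: energy_def curvature_sq_def Let_def)

definition complex_of_pair :: "real \<times> real \<Rightarrow> complex" where
  "complex_of_pair p = Complex (fst p) (snd p)"

lemma norm_complex_of_pair [simp]: "norm (complex_of_pair p) = norm p"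
  by (cases p) (simp add: complex_of_pair_def norm_complex_def norm_Pair)

lemma complex_of_pair_eq_0_iff [simp]: "complex_of_pair p = 0 \<longleftrightarrow> p = 0"
  by (metis norm_complex_of_pair norm_eq_zero)

lemma bounded_linear_complex_of_pair: "bounded_linear complex_of_pair"
  by (rule bounded_linear_intro[where K=1])
     (auto simp: complex_eq_iff complex_of_pair_def
        norm_complex_of_pair[unfolded complex_of_pair_def])

lemma complex_of_pair_add: "complex_of_pair (p + q) = complex_of_pair p + complex_of_pair q"
  by (simp add: complex_of_pair_def complex_eq_iff)

text \<open>Identifying the plane with \<open>\<complex>\<close>, the tangent of a curve with velocity \<open>V\<close> turns at the
  rate \<open>Im (V' / V)\<close>.\<close>

lemma curvature_sq_eq_Im_divide:
  assumes "v \<noteq> 0"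
  shows "curvature_sq a v = (Im (complex_of_pair a / complex_of_pair v) / norm v)\<^sup>2"
proof -
  obtain a1 a2 v1 v2 where a: "a = (a1, a2)" and v: "v = (v1, v2)" by (cases a, cases v)
  define n where "n = norm v"
  have n: "n > 0" "n\<^sup>2 = v1\<^sup>2 + v2\<^sup>2" using assms by (simp add: n_def, simp add: n_def v norm_Pair)
  have Lagrange: "(a1\<^sup>2 + a2\<^sup>2) * n\<^sup>2 - (a1 * v1 + a2 * v2)\<^sup>2 = (a2 * v1 - a1 * v2)\<^sup>2"
    unfolding n(2) by (simp add: power2_eq_square algebra_simps)
  have "curvature_sq a v = ((a1\<^sup>2 + a2\<^sup>2) - (a1 * v1 + a2 * v2)\<^sup>2 / n\<^sup>2) / n ^ 4"
    unfolding curvature_sq_def n_def[symmetric] by (simp add: a v norm_Pair)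
  also have "\<dots> = ((a1\<^sup>2 + a2\<^sup>2) * n\<^sup>2 - (a1 * v1 + a2 * v2)\<^sup>2) / n ^ 6"
    using n(1) by (simp add: field_simps power_eq_if)
  also have "\<dots> = ((a2 * v1 - a1 * v2) / n\<^sup>2 / n)\<^sup>2"
    unfolding Lagrange using n(1) by (simp add: field_simps power_eq_if)
  also have "(a2 * v1 - a1 * v2) / n\<^sup>2 = Im (complex_of_pair a / complex_of_pair v)"
    by (simp add: Im_divide complex_of_pair_def a v n(2))
  finally show ?thesis by (simp add: n_def)
qed

lemma curvature_sq_nonneg: "0 \<le> curvature_sq a v"
proof (cases "v = 0")
  case True
  then show ?thesis by (simp add: curvature_sq_def)
next
  case False
  then show ?thesis by (simp add: curvature_sq_eq_Im_divide)
qed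

lemma sqrt_curvature_sq_mult_norm:
  assumes "v \<noteq> 0"
  shows "sqrt (curvature_sq a v) * norm v = \<bar>Im (complex_of_pair a / complex_of_pair v)\<bar>"
  using assms by (simp add: curvature_sq_eq_Im_divide)

lemma curvature_sq_mult_norm_le:
  assumes "v \<noteq> 0"
  shows "curvature_sq a v * norm v \<le> (norm a)\<^sup>2 / (norm v) ^ 3"
proof -
  have "curvature_sq a v * norm v = ((norm a)\<^sup>2 - (inner a v)\<^sup>2 / (norm v)\<^sup>2) / (norm v) ^ 3"
    using assms by (simp add: curvature_sq_def field_simps power_eq_if)
  also have "\<dots> \<le> (norm a)\<^sup>2 / (norm v) ^ 3"
    by (intro divide_right_mono) auto
  finally show ?thesis .
qed

lemma curvature_sq_mult_norm_le_norm_sq: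
  assumes "1 \<le> norm v"
  shows "curvature_sq a v * norm v \<le> (norm a)\<^sup>2"
proof -
  have "curvature_sq a v * norm v \<le> (norm a)\<^sup>2 / (norm v) ^ 3"
    using assms by (intro curvature_sq_mult_norm_le) auto
  also have "\<dots> \<le> (norm a)\<^sup>2"
    using assms by (simp add: divide_le_eq one_le_power mult_le_cancel_left1)
  finally show ?thesis .
qed

lemma dcurve_eq:
  assumes "\<And>t. t \<in> {0..1} \<Longrightarrow> (\<gamma> has_vector_derivative D t) (at t)" "t \<in> {0..1}"
  shows "dcurve \<gamma> t = D t"
  unfolding dcurve_def
  by (rule vector_derivative_within_closed_interval)
     (use assms in \<open>auto intro: has_vector_derivative_at_within\<close>)

lemma ddcurve_eq:
  assumes D: "\<And>t. t \<in> {0..1} \<Longrightarrow> (\<gamma> has_vector_derivative D t) (at t)"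
    and D2: "\<And>t. t \<in> {0..1} \<Longrightarrow> (D has_vector_derivative D2 t) (at t)"
    and t: "t \<in> {0..1}"
  shows "ddcurve \<gamma> t = D2 t"
  unfolding ddcurve_def
proof (rule vector_derivative_within_closed_interval)
  show "(dcurve \<gamma> has_vector_derivative D2 t) (at t within {0..1})"
    by (rule has_vector_derivative_transform_within[of D _ _ _ 1])
       (use t dcurve_eq[OF D] D2[OF t] in \<open>auto intro: has_vector_derivative_at_within\<close>)
qed (use t in auto)

lemma admissible_if_C2:
  assumes D: "\<And>t. t \<in> {0..1} \<Longrightarrow> (\<gamma> has_vector_derivative D t) (at t)"
    and D2: "\<And>t. t \<in> {0..1} \<Longrightarrow> (D has_vector_derivative D2 t) (at t)"
    and D2_cont: "continuous_on {0..1} D2"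
    and regular: "\<And>t. t \<in> {0..1} \<Longrightarrow> D t \<noteq> 0"
    and above: "\<And>t. t \<in> {0..1} \<Longrightarrow> \<gamma> t \<in> Omega_cl \<psi>"
    and ends: "fst (\<gamma> 0) = 0" "fst (\<gamma> 1) = 1" "snd (\<gamma> 0) = snd (\<gamma> 1)" "D 0 = D 1"
  shows "admissible \<psi> \<gamma>"
  unfolding admissible_def H2_curve_def
proof (intro conjI ballI exI[of _ D2])
  show "\<gamma> differentiable at t within {0..1}" if "t \<in> {0..1}" for t
    using D[OF that] by (meson differentiableI_vector has_vector_derivative_at_within)
  show "D2 absolutely_integrable_on {0..1}"
    using absolutely_integrable_continuous[of 0 1 D2] D2_cont by simp
  show "(\<lambda>t. (norm (D2 t))\<^sup>2) integrable_on {0..1}"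
    by (rule integrable_continuous_interval) (use D2_cont in \<open>auto intro!: continuous_intros\<close>)
  fix t :: real assume t: "t \<in> {0..1}"
  have "(D2 has_integral (D t - D 0)) {0..t}"
    by (rule fundamental_theorem_of_calculus)
      (use t D2 in \<open>auto intro: has_vector_derivative_at_within\<close>)
  then show "dcurve \<gamma> t = dcurve \<gamma> 0 + integral {0..t} D2"
    using dcurve_eq[OF D] t by (simp add: integral_unique)
  show "0 < norm (dcurve \<gamma> t)" using dcurve_eq[OF D t] regular[OF t] by simp
  show "\<gamma> t \<in> Omega_cl \<psi>" using above[OF t] .
qed (use ends dcurve_eq[OF D] in auto)

lemma integral_le_const:
  fixes f :: "real \<Rightarrow> real"
  assumes "\<And>t. t \<in> {a..b} \<Longrightarrow> f t \<le> C" "0 \<le> C" "a \<le> b"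
  shows "integral {a..b} f \<le> C * (b - a)"
  \<comment> \<open>\<open>0 \<le> C\<close> covers the junk value \<open>integral {a..b} f = 0\<close> of a non-integrable \<open>f\<close>.\<close>
proof (cases "f integrable_on {a..b}")
  case True
  then have "integral {a..b} f \<le> integral {a..b} (\<lambda>t::real. C)"
    by (intro integral_le integrable_const_ivl) (use assms in auto)
  then show ?thesis using assms by (simp add: mult.commute)
next
  case False
  then show ?thesis using assms by (simp add: not_integrable_integral)
qed

lemma energy_le_if_integrand_le:
  assumes "\<And>t. t \<in> {0..1} \<Longrightarrow>
      (\<epsilon>\<^sup>2 * curvature_sq (ddcurve \<gamma> t) (dcurve \<gamma> t) + Theta \<alpha> \<psi> (\<gamma> t)) * norm (dcurve \<gamma> t) \<le> C"
    and "0 \<le> C"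
  shows "energy \<epsilon> \<alpha> \<psi> \<gamma> \<le> C"
  unfolding energy_eq_integral_curvature_sq using integral_le_const[of 0 1, OF assms] by simp

lemma
  fixes h :: real
  assumes below: "\<And>x. x \<in> {0..1} \<Longrightarrow> \<psi> x \<le> h"
  shows admissible_horizontal_line: "admissible \<psi> (\<lambda>t. (t, h))"
    and energy_horizontal_line_le: "\<alpha> \<le> 1 \<Longrightarrow> energy \<epsilon> \<alpha> \<psi> (\<lambda>t. (t, h)) \<le> 1"
proof -
  have D: "((\<lambda>t. (t, h)) has_vector_derivative (1, 0)) (at t)" for t
    by (auto intro!: derivative_eq_intros)
  have D2: "((\<lambda>t. (1::real, 0::real)) has_vector_derivative 0) (at t)" for t
    by (rule has_vector_derivative_const)
  show "admissible \<psi> (\<lambda>t. (t, h))"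
    by (rule admissible_if_C2[OF D D2]) (use below in \<open>auto simp: Omega_cl_def zero_prod_def\<close>)
  show "energy \<epsilon> \<alpha> \<psi> (\<lambda>t. (t, h)) \<le> 1" if "\<alpha> \<le> 1"
  proof (rule energy_le_if_integrand_le)
    fix t :: real assume t: "t \<in> {0..1}"
    show "(\<epsilon>\<^sup>2 * curvature_sq (ddcurve (\<lambda>t. (t, h)) t) (dcurve (\<lambda>t. (t, h)) t)
           + Theta \<alpha> \<psi> (t, h)) * norm (dcurve (\<lambda>t. (t, h)) t) \<le> 1"
      using dcurve_eq[OF D t] ddcurve_eq[OF D D2 t] that
      by (simp add: curvature_sq_def Theta_def)
  qed simp
qed

lemma periodic_shift_of_int:
  assumes periodic: "\<And>x. f (x + 1) = f x"
  shows "f (x + of_int k) = f x"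
proof (induction k arbitrary: x rule: int_induct[where k=0])
  case (step1 i)
  then show ?case using periodic[of "x + of_int i"] by (simp add: add.assoc)
next
  case (step2 i)
  then show ?case using periodic[of "x + of_int (i - 1)"] by (simp add: add.assoc)
qed simp

lemma deriv_periodic:
  fixes f f' :: "real \<Rightarrow> real"
  assumes f': "\<And>x. (f has_real_derivative f' x) (at x)" and periodic: "\<And>x. f (x + 1) = f x"
  shows "f' (x + 1) = f' x"
proof -
  have "((\<lambda>x. f (x + 1)) has_real_derivative f' (x + 1)) (at x)"
    using DERIV_shift f'[of "x + 1"] by blast
  then have "(f has_real_derivative f' (x + 1)) (at x)" using periodic by simp
  then show ?thesis using f'[of x] DERIV_unique by blast
qed

lemma abs_deriv_le_half_bound_if_periodic:
  fixes f f' f'' :: "real \<Rightarrow> real"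
  assumes f': "\<And>x. (f has_real_derivative f' x) (at x)"
    and f'': "\<And>x. (f' has_real_derivative f'' x) (at x)"
    and periodic: "\<And>x. f (x + 1) = f x"
    and bound: "\<And>x. \<bar>f'' x\<bar> \<le> M"
  shows "\<bar>f' x\<bar> \<le> M / 2"
proof -
  \<comment> \<open>\<open>f'\<close> vanishes somewhere, hence within distance \<open>1/2\<close> of every point.\<close>
  obtain x0 where "f 1 - f 0 = (1 - 0) * f' x0"
    using MVT2[of 0 1 f f'] f' by auto
  then have x0: "f' x0 = 0" using periodic[of 0] by simp
  define y where "y = x0 + of_int (round (x - x0))"
  have "f' y = 0"
    unfolding y_def using periodic_shift_of_int[of f', OF deriv_periodic[OF f' periodic]] x0 by simp
  then have "\<bar>f' x\<bar> = \<bar>f' x - f' y\<bar>" by simp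
  also have "\<dots> \<le> M * \<bar>x - y\<bar>"
    using field_differentiable_bound[of UNIV f' f'' M x y] f'' bound by auto
  also have "\<dots> \<le> M * (1 / 2)"
    using of_int_round_abs_le[of "x - x0"] bound[of x]
    by (intro mult_left_mono) (auto simp: y_def abs_minus_commute algebra_simps)
  finally show ?thesis by simp
qed

lemma graph_energy_density_le:
  fixes p q :: real
  assumes p: "p\<^sup>2 \<le> B / 4" and q: "q\<^sup>2 \<le> B" and \<alpha>: "0 \<le> \<alpha>"
  shows "(\<epsilon>\<^sup>2 * curvature_sq (0, q) (1, p) + \<alpha>) * norm (1::real, p) \<le> \<alpha> + B * (\<epsilon>\<^sup>2 + \<alpha> / 8)"
proof -
  have B: "0 \<le> B" using q by (meson order_trans zero_le_power2)
  have v: "norm (1::real, p) = sqrt (1 + p\<^sup>2)" by (simp add: norm_Pair)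
  have "(1 + B / 8)\<^sup>2 = 1 + B / 4 + (B / 8)\<^sup>2" by (simp add: power2_eq_square field_simps)
  then have "1 + p\<^sup>2 \<le> (1 + B / 8)\<^sup>2" using p zero_le_power2[of "B / 8"] by linarith
  then have length_bound: "norm (1::real, p) \<le> 1 + B / 8"
    unfolding v using B by (intro real_le_lsqrt) auto
  have bending_bound: "curvature_sq (0, q) (1, p) * norm (1::real, p) \<le> B"
    using curvature_sq_mult_norm_le_norm_sq[of "(1, p)" "(0, q)"] q by (simp add: v norm_Pair)
  have "(\<epsilon>\<^sup>2 * curvature_sq (0, q) (1, p) + \<alpha>) * norm (1::real, p)
        = \<epsilon>\<^sup>2 * (curvature_sq (0, q) (1, p) * norm (1::real, p)) + \<alpha> * norm (1::real, p)"
    by (simp add: algebra_simps)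
  also have "\<dots> \<le> \<epsilon>\<^sup>2 * B + \<alpha> * (1 + B / 8)"
    using bending_bound length_bound \<alpha> by (intro add_mono mult_left_mono) auto
  finally show ?thesis by (simp add: algebra_simps)
qed

lemma
  fixes \<psi> \<psi>' \<psi>'' :: "real \<Rightarrow> real"
  assumes \<psi>': "\<And>x. (\<psi> has_real_derivative \<psi>' x) (at x)"
    and \<psi>'': "\<And>x. (\<psi>' has_real_derivative \<psi>'' x) (at x)"
    and \<psi>''_cont: "continuous_on {0..1} \<psi>''"
    and periodic: "\<And>x. \<psi> (x + 1) = \<psi> x"
  shows admissible_graph: "admissible \<psi> (\<lambda>t. (t, \<psi> t))"
    and energy_graph_le: "\<lbrakk>\<And>x. (\<psi>'' x)\<^sup>2 \<le> B; 0 \<le> \<alpha>\<rbrakk> \<Longrightarrow>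
           energy \<epsilon> \<alpha> \<psi> (\<lambda>t. (t, \<psi> t)) \<le> \<alpha> + B * (\<epsilon>\<^sup>2 + \<alpha> / 8)"
proof -
  have D: "((\<lambda>t. (t, \<psi> t)) has_vector_derivative (1, \<psi>' t)) (at t)" for t
    by (intro has_vector_derivative_Pair has_vector_derivative_id)
       (use \<psi>' has_real_derivative_iff_has_vector_derivative in blast)
  have D2: "((\<lambda>t. (1::real, \<psi>' t)) has_vector_derivative (0, \<psi>'' t)) (at t)" for t
    by (intro has_vector_derivative_Pair has_vector_derivative_const)
       (use \<psi>'' has_real_derivative_iff_has_vector_derivative in blast)
  show "admissible \<psi> (\<lambda>t. (t, \<psi> t))"
  proof (rule admissible_if_C2[OF D D2])
    show "continuous_on {0..1} (\<lambda>t. (0::real, \<psi>'' t))"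
      using \<psi>''_cont by (intro continuous_intros)
  qed (use periodic[of 0] deriv_periodic[OF \<psi>' periodic, of 0]
      in \<open>auto simp: Omega_cl_def zero_prod_def\<close>)
  show "energy \<epsilon> \<alpha> \<psi> (\<lambda>t. (t, \<psi> t)) \<le> \<alpha> + B * (\<epsilon>\<^sup>2 + \<alpha> / 8)"
    if bound: "\<And>x. (\<psi>'' x)\<^sup>2 \<le> B" and \<alpha>: "0 \<le> \<alpha>"
  proof (rule energy_le_if_integrand_le)
    fix t :: real assume t: "t \<in> {0..1}"
    have "\<bar>\<psi>'' x\<bar> \<le> sqrt B" for x
      using real_sqrt_le_mono[OF bound[of x]] by simp
    then have "\<bar>\<psi>' t\<bar> \<le> sqrt B / 2"
      by (rule abs_deriv_le_half_bound_if_periodic[OF \<psi>' \<psi>'' periodic])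
    then have "(\<psi>' t)\<^sup>2 \<le> (sqrt B / 2)\<^sup>2"
      by (metis abs_ge_zero power2_abs power_mono)
    also have "\<dots> = B / 4"
      using bound[of 0] by (simp add: power_divide order_trans[OF zero_le_power2])
    finally show "(\<epsilon>\<^sup>2 * curvature_sq (ddcurve (\<lambda>t. (t, \<psi> t)) t) (dcurve (\<lambda>t. (t, \<psi> t)) t)
        + Theta \<alpha> \<psi> (t, \<psi> t)) * norm (dcurve (\<lambda>t. (t, \<psi> t)) t) \<le> \<alpha> + B * (\<epsilon>\<^sup>2 + \<alpha> / 8)"
      using graph_energy_density_le[OF _ bound[of t] \<alpha>] dcurve_eq[OF D t] ddcurve_eq[OF D D2 t]
      by (simp add: Theta_def)
  qed (use \<alpha> order_trans[OF zero_le_power2 bound[of 0]] in simp)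
qed

section \<open>Lower bounds for admissible curves\<close>

lemma H2_curve_ddcurve_ae:
  assumes "H2_curve \<gamma>"
  obtains g N where "negligible N" "g absolutely_integrable_on {0..1}"
    "(\<lambda>t. (norm (g t))\<^sup>2) integrable_on {0..1}"
    "\<And>t. t \<in> {0..1} \<Longrightarrow> dcurve \<gamma> t = dcurve \<gamma> 0 + integral {0..t} g"
    "\<And>t. t \<in> {0..1} - N \<Longrightarrow> ddcurve \<gamma> t = g t"
proof -
  obtain g where g: "g absolutely_integrable_on {0..1}" "(\<lambda>t. (norm (g t))\<^sup>2) integrable_on {0..1}"
    and v_g: "\<And>t. t \<in> {0..1} \<Longrightarrow> dcurve \<gamma> t = dcurve \<gamma> 0 + integral {0..t} g"
    using assms unfolding H2_curve_def by blast
  obtain N where N: "negligible N"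
    "\<And>t. t \<in> {0<..<1} \<Longrightarrow> t \<notin> N \<Longrightarrow> ((\<lambda>s. integral {0..s} g) has_vector_derivative g t) (at t)"
    using indefinite_integral_has_vector_derivative_ae
        [OF set_lebesgue_integral_eq_integral(1)[OF g(1)]]
    by blast
  have dd_g: "ddcurve \<gamma> t = g t" if t: "t \<in> {0..1} - (N \<union> {0, 1})" for t
  proof -
    have "((\<lambda>s. dcurve \<gamma> 0 + integral {0..s} g) has_vector_derivative g t) (at t)"
      using has_vector_derivative_add[OF has_vector_derivative_const N(2)[of t]] t by simp
    then have "((\<lambda>s. dcurve \<gamma> 0 + integral {0..s} g) has_vector_derivative g t)
        (at t within {0..1})"
      by (rule has_vector_derivative_at_within)
    then have "(dcurve \<gamma> has_vector_derivative g t) (at t within {0..1})"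
      by (rule has_vector_derivative_transform_within[where d=1]) (use t v_g[symmetric] in auto)
    then show ?thesis unfolding ddcurve_def
      by (rule vector_derivative_within_closed_interval[rotated 2]) (use t in auto)
  qed
  have "negligible (N \<union> {0, 1})" using N(1) by simp
  from that[OF this g v_g dd_g] show ?thesis .
qed

lemma H2_curve_continuous_dcurve:
  assumes "H2_curve \<gamma>"
  shows "continuous_on {0..1} (dcurve \<gamma>)"
proof -
  obtain g where g: "g absolutely_integrable_on {0..1}"
    and v_g: "\<And>t. t \<in> {0..1} \<Longrightarrow> dcurve \<gamma> t = dcurve \<gamma> 0 + integral {0..t} g"
    using assms unfolding H2_curve_def by blast
  have "continuous_on {0..1} (\<lambda>t. dcurve \<gamma> 0 + integral {0..t} g)"
    using set_lebesgue_integral_eq_integral(1)[OF g]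
    by (intro continuous_intros indefinite_integral_continuous_1)
  then show ?thesis by (rule continuous_on_eq) (use v_g[symmetric] in auto)
qed

lemma admissible_dcurve_has_integral:
  assumes "admissible \<psi> \<gamma>"
  shows "(dcurve \<gamma> has_integral (1, 0)) {0..1}"
proof -
  have "(\<gamma> has_vector_derivative dcurve \<gamma> t) (at t within {0..1})" if "t \<in> {0..1}" for t
    using assms that vector_derivative_works
    unfolding admissible_def H2_curve_def dcurve_def by blast
  then have "(dcurve \<gamma> has_integral (\<gamma> 1 - \<gamma> 0)) {0..1}"
    by (intro fundamental_theorem_of_calculus) auto
  moreover have "\<gamma> 1 - \<gamma> 0 = (1, 0)"
    using assms unfolding admissible_def by (simp add: prod_eq_iff)
  ultimately show ?thesis by simp
qed

lemma curve_length_ge_1: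
  assumes "admissible \<psi> \<gamma>"
  shows "1 \<le> curve_length \<gamma>"
proof -
  have "((\<lambda>t. fst (dcurve \<gamma> t)) has_integral 1) {0..1}"
    using has_integral_linear[OF admissible_dcurve_has_integral[OF assms] bounded_linear_fst]
    by (simp add: o_def)
  moreover have "(\<lambda>t. norm (dcurve \<gamma> t)) integrable_on {0..1}"
    using assms unfolding admissible_def
    by (intro integrable_continuous_interval continuous_on_norm H2_curve_continuous_dcurve) simp
  moreover have "fst (dcurve \<gamma> t) \<le> norm (dcurve \<gamma> t)" for t
    by (metis abs_ge_self norm_fst_le order_trans prod.collapse real_norm_def)
  ultimately show ?thesis
    unfolding curve_length_def by (rule has_integral_le[OF _ integrable_integral])
qed

lemma admissible_dcurve_nonzero:
  assumes "admissible \<psi> \<gamma>" "t \<in> {0..1}"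
  shows "dcurve \<gamma> t \<noteq> 0"
  using assms unfolding admissible_def by auto

lemma integrable_bending_density:
  assumes adm: "admissible \<psi> \<gamma>"
  shows "(\<lambda>t. curvature_sq (ddcurve \<gamma> t) (dcurve \<gamma> t) * norm (dcurve \<gamma> t)) integrable_on {0..1}"
proof -
  obtain g N where N: "negligible N" and g: "g absolutely_integrable_on {0..1}"
    "(\<lambda>t. (norm (g t))\<^sup>2) integrable_on {0..1}"
    and dd_g: "\<And>t. t \<in> {0..1} - N \<Longrightarrow> ddcurve \<gamma> t = g t"
    using H2_curve_ddcurve_ae adm unfolding admissible_def by metis
  define v where "v = dcurve \<gamma>"
  have v_cont: "continuous_on {0..1} v"
    using adm unfolding v_def admissible_def by (intro H2_curve_continuous_dcurve) simp
  have v_nz: "v t \<noteq> 0" if "t \<in> {0..1}" for t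
    using admissible_dcurve_nonzero[OF adm that] by (simp add: v_def)
  obtain m where m: "m > 0" "\<And>t. t \<in> {0..1} \<Longrightarrow> m \<le> norm (v t)"
  proof -
    obtain t0 where "t0 \<in> {0..1}" "\<And>t. t \<in> {0..1} \<Longrightarrow> norm (v t0) \<le> norm (v t)"
      using continuous_attains_inf[OF compact_Icc _ continuous_on_norm[OF v_cont]] by fastforce
    then show ?thesis using that[of "norm (v t0)"] v_nz by auto
  qed
  have "(\<lambda>t. curvature_sq (g t) (v t) * norm (v t)) integrable_on {0..1}"
  proof (rule measurable_bounded_by_integrable_imp_integrable)
    have "g \<in> borel_measurable (lebesgue_on {0..1})"
      using absolutely_integrable_measurable[of "{0..1}" g] g(1) by simp
    moreover have "v \<in> borel_measurable (lebesgue_on {0..1})"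
      using continuous_imp_measurable_on_sets_lebesgue[OF v_cont] by simp
    ultimately show
      "(\<lambda>t. curvature_sq (g t) (v t) * norm (v t)) \<in> borel_measurable (lebesgue_on {0..1})"
      unfolding curvature_sq_def
      by (intro borel_measurable_times borel_measurable_divide borel_measurable_diff
          borel_measurable_power borel_measurable_norm borel_measurable_inner) auto
    show "(\<lambda>t. (1 / m ^ 3) * (norm (g t))\<^sup>2) integrable_on {0..1}"
      using integrable_on_mult_right[OF g(2)] .
    show "norm (curvature_sq (g t) (v t) * norm (v t)) \<le> (1 / m ^ 3) * (norm (g t))\<^sup>2"
      if "t \<in> {0..1}" for t
    proof -
      have "curvature_sq (g t) (v t) * norm (v t) \<le> (norm (g t))\<^sup>2 / (norm (v t)) ^ 3"
        using curvature_sq_mult_norm_le[OF v_nz[OF that]] .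
      also have "\<dots> \<le> (norm (g t))\<^sup>2 / m ^ 3"
        using m(1) m(2)[OF that] by (intro divide_left_mono power_mono mult_pos_pos) auto
      finally show ?thesis using curvature_sq_nonneg[of "g t" "v t"] by simp
    qed
  qed auto
  then show ?thesis
    by (rule integrable_spike[OF _ N]) (use dd_g in \<open>auto simp: v_def\<close>)
qed

lemma total_curvature_density_ae:
  assumes adm: "admissible \<psi> \<gamma>"
  defines "V \<equiv> \<lambda>t. complex_of_pair (dcurve \<gamma> t)"
  obtains G N where "negligible N" "G absolutely_integrable_on {0..1}"
    "\<And>t. t \<in> {0..1} \<Longrightarrow> V t = V 0 + integral {0..t} G"
    "\<And>t. t \<in> {0..1} - N \<Longrightarrow>
       sqrt (curvature_sq (ddcurve \<gamma> t) (dcurve \<gamma> t)) * norm (dcurve \<gamma> t) = \<bar>Im (G t / V t)\<bar>"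
proof -
  obtain g N where N: "negligible N" and g: "g absolutely_integrable_on {0..1}"
    and v_g: "\<And>t. t \<in> {0..1} \<Longrightarrow> dcurve \<gamma> t = dcurve \<gamma> 0 + integral {0..t} g"
    and dd_g: "\<And>t. t \<in> {0..1} - N \<Longrightarrow> ddcurve \<gamma> t = g t"
    using H2_curve_ddcurve_ae adm unfolding admissible_def by metis
  define G where "G t = complex_of_pair (g t)" for t
  have "G absolutely_integrable_on {0..1}"
    using absolutely_integrable_linear[OF g bounded_linear_complex_of_pair]
    by (simp add: G_def[abs_def] o_def)
  moreover have "V t = V 0 + integral {0..t} G" if "t \<in> {0..1}" for t
  proof -
    have "g integrable_on {0..t}"
      using integrable_on_subinterval[OF set_lebesgue_integral_eq_integral(1)[OF g]] that by auto
    then have "integral {0..t} G = complex_of_pair (integral {0..t} g)"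
      using integral_linear[OF _ bounded_linear_complex_of_pair] by (simp add: G_def[abs_def] o_def)
    then show ?thesis using v_g[OF that] by (simp add: V_def complex_of_pair_add)
  qed
  moreover have
    "sqrt (curvature_sq (ddcurve \<gamma> t) (dcurve \<gamma> t)) * norm (dcurve \<gamma> t) = \<bar>Im (G t / V t)\<bar>"
    if "t \<in> {0..1} - N" for t
    using sqrt_curvature_sq_mult_norm[OF admissible_dcurve_nonzero[OF adm]] that dd_g
    by (simp add: G_def V_def)
  ultimately show ?thesis using that N by blast
qed

lemma integrable_total_curvature_density:
  assumes adm: "admissible \<psi> \<gamma>"
  shows "(\<lambda>t. sqrt (curvature_sq (ddcurve \<gamma> t) (dcurve \<gamma> t)) * norm (dcurve \<gamma> t)) integrable_on
    {0..1}"
proof -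
  define V where "V t = complex_of_pair (dcurve \<gamma> t)" for t
  obtain G N where N: "negligible N" and G: "G absolutely_integrable_on {0..1}"
    and density: "\<And>t. t \<in> {0..1} - N \<Longrightarrow>
       sqrt (curvature_sq (ddcurve \<gamma> t) (dcurve \<gamma> t)) * norm (dcurve \<gamma> t) = \<bar>Im (G t / V t)\<bar>"
    using total_curvature_density_ae[OF adm] unfolding V_def by metis
  have V_cont: "continuous_on {0..1} V"
    unfolding V_def using adm unfolding admissible_def
    by (intro bounded_linear.continuous_on[OF bounded_linear_complex_of_pair]
      H2_curve_continuous_dcurve) auto
  have "(\<lambda>t. G t / V t) absolutely_integrable_on {0..1}"
    using absolutely_integrable_on_divide_continuous[OF compact_Icc V_cont _ G]
      admissible_dcurve_nonzero[OF adm] by (auto simp: V_def)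
  then have "(\<lambda>t. Im (G t / V t)) absolutely_integrable_on {0..1}"
    using absolutely_integrable_linear[OF _ bounded_linear_Im] by (simp add: o_def)
  then have "(\<lambda>t. \<bar>Im (G t / V t)\<bar>) integrable_on {0..1}"
    unfolding absolutely_integrable_on_def by (simp add: real_norm_def)
  then show ?thesis
    by (rule integrable_spike[OF _ N]) (use density in auto)
qed

lemma pi_le_total_curvature:
  assumes adm: "admissible \<psi> \<gamma>" and not_graph: "\<not> graph_curve \<psi> \<gamma>"
  shows "pi \<le> total_curvature \<gamma>"
proof -
  define V where "V t = complex_of_pair (dcurve \<gamma> t)" for t
  obtain G N where N: "negligible N" and G: "G absolutely_integrable_on {0..1}"
    and V_G: "\<And>t. t \<in> {0..1} \<Longrightarrow> V t = V 0 + integral {0..t} G"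
    and density: "\<And>t. t \<in> {0..1} - N \<Longrightarrow>
       sqrt (curvature_sq (ddcurve \<gamma> t) (dcurve \<gamma> t)) * norm (dcurve \<gamma> t) = \<bar>Im (G t / V t)\<bar>"
    using total_curvature_density_ae[OF adm] unfolding V_def by metis
  obtain t0 where t0: "t0 \<in> {0..1}" "fst (dcurve \<gamma> t0) \<le> 0"
    using adm not_graph unfolding graph_curve_def by (auto simp: not_less)
  have "pi \<le> integral {0..1} (\<lambda>t. \<bar>Im (G t / V t)\<bar>)"
  proof (rule pi_le_total_turning[OF _ _ G V_G])
    show "continuous_on {0..1} V"
      unfolding V_def using adm unfolding admissible_def
      by (intro bounded_linear.continuous_on[OF bounded_linear_complex_of_pair]
          H2_curve_continuous_dcurve) auto
    show "V t \<noteq> 0" if "t \<in> {0..1}" for t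
      using admissible_dcurve_nonzero[OF adm that] by (simp add: V_def)
    show "V 1 = V 0" using adm unfolding admissible_def V_def by simp
    show "(V has_integral 1) {0..1}"
      using has_integral_linear[OF admissible_dcurve_has_integral[OF adm]
          bounded_linear_complex_of_pair]
      by (simp add: V_def[abs_def] o_def complex_of_pair_def one_complex.code)
    show "Re (V t0 * cnj 1) \<le> 0" using t0 by (simp add: V_def complex_of_pair_def)
  qed (use t0 in auto)
  also have "\<dots> = total_curvature \<gamma>"
    unfolding total_curvature_def by (rule integral_spike[OF N]) (use density in auto)
  finally show ?thesis .
qed

lemma weighted_Cauchy_Schwarz_integral:
  fixes w n :: "real \<Rightarrow> real"
  assumes int: "w integrable_on S" "(\<lambda>t. (w t)\<^sup>2 / n t) integrable_on S" "n integrable_on S"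
    and w: "\<And>t. t \<in> S \<Longrightarrow> 0 \<le> w t" and n: "\<And>t. t \<in> S \<Longrightarrow> 0 < n t"
    and N: "0 < integral S n"
  shows "(integral S w)\<^sup>2 \<le> integral S (\<lambda>t. (w t)\<^sup>2 / n t) * integral S n"
proof -
  define W A where "W = integral S w" and "A = integral S (\<lambda>t. (w t)\<^sup>2 / n t)"
  have W: "0 \<le> W" unfolding W_def using int(1) w by (rule integral_nonneg)
  have A: "0 \<le> A" unfolding A_def using int(2) n by (intro integral_nonneg) (auto simp: less_imp_le)
  show ?thesis
  proof (cases "W = 0")
    case True
    then show ?thesis using A N by (simp add: W_def A_def)
  next
    case False
    define c where "c = integral S n / W"
    have c: "c > 0" using False W N by (simp add: c_def)
    have AM_GM: "w t \<le> c / 2 * ((w t)\<^sup>2 / n t) + n t / (2 * c)" if "t \<in> S" for t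
    proof -
      have "0 \<le> (c * w t - n t)\<^sup>2" by simp
      then have "2 * c * n t * w t \<le> c\<^sup>2 * (w t)\<^sup>2 + (n t)\<^sup>2"
        by (simp add: power2_eq_square algebra_simps)
      then show ?thesis using c n[OF that] by (simp add: field_simps power2_eq_square)
    qed
    have "W \<le> integral S (\<lambda>t. c / 2 * ((w t)\<^sup>2 / n t) + n t / (2 * c))"
      unfolding W_def using AM_GM int
      by (intro integral_le integrable_add integrable_on_mult_right integrable_on_divide) auto
    also have "\<dots> = integral S (\<lambda>t. c / 2 * ((w t)\<^sup>2 / n t)) + integral S (\<lambda>t. n t / (2 * c))"
      by (intro integral_add integrable_on_mult_right integrable_on_divide int)
    also have "\<dots> = c / 2 * A + integral S n / (2 * c)"
      by (simp only: A_def integral_mult_right integral_divide)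
    also have "\<dots> = integral S n * A / (2 * W) + W / 2"
      using False N by (simp add: c_def)
    finally have "W * W \<le> integral S n * A"
      using W False by (simp add: field_simps)
    then show ?thesis by (simp add: W_def A_def power2_eq_square mult.commute)
  qed
qed

lemma sq_total_curvature_le_bending_mult_length:
  assumes adm: "admissible \<psi> \<gamma>"
  shows "(total_curvature \<gamma>)\<^sup>2 \<le> bending \<gamma> * curve_length \<gamma>"
proof -
  have v_nz: "dcurve \<gamma> t \<noteq> 0" if "t \<in> {0..1}" for t using admissible_dcurve_nonzero[OF adm that] .
  have bending_density: "(sqrt (curvature_sq (ddcurve \<gamma> t) (dcurve \<gamma> t)) * norm (dcurve \<gamma> t))\<^sup>2
      / norm (dcurve \<gamma> t) = curvature_sq (ddcurve \<gamma> t) (dcurve \<gamma> t) * norm (dcurve \<gamma> t)"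
    if "t \<in> {0..1}" for t
    using v_nz[OF that] curvature_sq_nonneg by (simp add: power_mult_distrib power2_eq_square)
  have length_int: "(\<lambda>t. norm (dcurve \<gamma> t)) integrable_on {0..1}"
    using adm unfolding admissible_def
    by (intro integrable_continuous_interval continuous_on_norm H2_curve_continuous_dcurve) simp
  have "(total_curvature \<gamma>)\<^sup>2 \<le> integral {0..1} (\<lambda>t.
      (sqrt (curvature_sq (ddcurve \<gamma> t) (dcurve \<gamma> t)) * norm (dcurve \<gamma> t))\<^sup>2 / norm (dcurve \<gamma> t))
      * curve_length \<gamma>"
    unfolding total_curvature_def curve_length_def
  proof (rule weighted_Cauchy_Schwarz_integral)
    show "(\<lambda>t. (sqrt (curvature_sq (ddcurve \<gamma> t) (dcurve \<gamma> t)) * norm (dcurve \<gamma> t))\<^sup>2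
        / norm (dcurve \<gamma> t)) integrable_on {0..1}"
      using integrable_bending_density[OF adm] by (rule integrable_eq) (use bending_density in simp)
    show "0 < integral {0..1} (\<lambda>t. norm (dcurve \<gamma> t))"
      using curve_length_ge_1[OF adm] by (simp add: curve_length_def)
  qed (use integrable_total_curvature_density[OF adm] length_int v_nz curvature_sq_nonneg in auto)
  also have "integral {0..1} (\<lambda>t.
      (sqrt (curvature_sq (ddcurve \<gamma> t) (dcurve \<gamma> t)) * norm (dcurve \<gamma> t))\<^sup>2 / norm (dcurve \<gamma> t))
      = bending \<gamma>"
    unfolding bending_def by (rule integral_cong) (use bending_density in simp)
  finally show ?thesis .
qed

lemma integrable_Theta_length_density:
  assumes adm: "admissible \<psi> \<gamma>" and \<psi>: "continuous_on UNIV \<psi>"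
  shows "(\<lambda>t. Theta \<alpha> \<psi> (\<gamma> t) * norm (dcurve \<gamma> t)) integrable_on {0..1}"
proof -
  have \<gamma>: "continuous_on {0..1} \<gamma>"
    using adm unfolding admissible_def H2_curve_def
    by (intro differentiable_imp_continuous_on) (auto simp: differentiable_on_def)
  define Z where "Z = {t \<in> {0..1}. snd (\<gamma> t) - \<psi> (fst (\<gamma> t)) = 0}"
  have "closed Z" unfolding Z_def
    by (intro continuous_closed_preimage_constant continuous_intros \<gamma>
        continuous_on_compose2[OF \<psi>]) auto
  moreover have "bounded Z" by (rule bounded_subset[OF bounded_closed_interval]) (auto simp: Z_def)
  ultimately have "Z \<in> sets lebesgue"
    by (simp add: compact_eq_bounded_closed fmeasurableD lmeasurable_compact)
  then have Z_meas: "(\<lambda>t. if t \<in> Z then \<alpha> else 1) \<in> borel_measurable (lebesgue_on {0..1})"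
    by (intro measurable_If_set) (auto simp: sets_restrict_space_iff Z_def)
  have "(\<lambda>t. (if t \<in> Z then \<alpha> else 1) * norm (dcurve \<gamma> t)) absolutely_integrable_on {0..1}"
  proof (rule absolutely_integrable_bounded_measurable_product_real[OF Z_meas])
    show "bounded ((\<lambda>t. if t \<in> Z then \<alpha> else 1) ` {0..1})"
      by (rule bounded_subset[of "{\<alpha>, 1}"]) auto
    show "(\<lambda>t. norm (dcurve \<gamma> t)) absolutely_integrable_on {0..1}"
      using adm unfolding admissible_def
      by (intro absolutely_integrable_continuous_real continuous_on_norm
        H2_curve_continuous_dcurve) simp
  qed auto
  then have "(\<lambda>t. (if t \<in> Z then \<alpha> else 1) * norm (dcurve \<gamma> t)) integrable_on {0..1}"
    using set_lebesgue_integral_eq_integral(1) by blast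
  then show ?thesis
    by (rule integrable_eq) (auto simp: Theta_def Z_def)
qed

lemma energy_ge_bending_length:
  assumes adm: "admissible \<psi> \<gamma>" and \<psi>: "continuous_on UNIV \<psi>" and \<alpha>: "\<alpha> \<le> 1"
  shows "\<epsilon>\<^sup>2 * bending \<gamma> + \<alpha> * curve_length \<gamma> \<le> energy \<epsilon> \<alpha> \<psi> \<gamma>"
proof -
  let ?k = "\<lambda>t. curvature_sq (ddcurve \<gamma> t) (dcurve \<gamma> t) * norm (dcurve \<gamma> t)"
  let ?n = "\<lambda>t. norm (dcurve \<gamma> t)"
  have length_int: "?n integrable_on {0..1}"
    using adm unfolding admissible_def
    by (intro integrable_continuous_interval continuous_on_norm H2_curve_continuous_dcurve) simp
  have "\<epsilon>\<^sup>2 * bending \<gamma> + \<alpha> * curve_length \<gamma> = integral {0..1} (\<lambda>t. \<epsilon>\<^sup>2 * ?k t + \<alpha> * ?n t)"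
    unfolding bending_def curve_length_def
    using integrable_bending_density[OF adm] length_int
    by (simp add: integral_add integrable_on_mult_right)
  also have "\<dots> \<le> integral {0..1} (\<lambda>t. \<epsilon>\<^sup>2 * ?k t + Theta \<alpha> \<psi> (\<gamma> t) * ?n t)"
  proof (rule integral_le)
    show "(\<lambda>t. \<epsilon>\<^sup>2 * ?k t + \<alpha> * ?n t) integrable_on {0..1}"
      using integrable_bending_density[OF adm] length_int
      by (intro integrable_add integrable_on_mult_right)
    show "(\<lambda>t. \<epsilon>\<^sup>2 * ?k t + Theta \<alpha> \<psi> (\<gamma> t) * ?n t) integrable_on {0..1}"
      using integrable_bending_density[OF adm] integrable_Theta_length_density[OF adm \<psi>]
      by (intro integrable_add integrable_on_mult_right)
    show "\<epsilon>\<^sup>2 * ?k t + \<alpha> * ?n t \<le> \<epsilon>\<^sup>2 * ?k t + Theta \<alpha> \<psi> (\<gamma> t) * ?n t" for t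
      using \<alpha> by (simp add: Theta_def mult_right_mono)
  qed
  also have "\<dots> = energy \<epsilon> \<alpha> \<psi> \<gamma>"
    unfolding energy_eq_integral_curvature_sq by (simp add: algebra_simps)
  finally show ?thesis .
qed

lemma energy_nonneg:
  assumes "0 \<le> \<alpha>"
  shows "0 \<le> energy \<epsilon> \<alpha> \<psi> \<gamma>"
proof -
  let ?f = "\<lambda>t. (\<epsilon>\<^sup>2 * curvature_sq (ddcurve \<gamma> t) (dcurve \<gamma> t) + Theta \<alpha> \<psi> (\<gamma> t))
      * norm (dcurve \<gamma> t)"
  have "0 \<le> Theta \<alpha> \<psi> p" for p using assms by (simp add: Theta_def)
  then have integrand: "0 \<le> ?f t" for t
    by (intro mult_nonneg_nonneg add_nonneg_nonneg zero_le_power2 curvature_sq_nonneg norm_ge_zero)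
  show ?thesis
    unfolding energy_eq_integral_curvature_sq
  proof (cases "?f integrable_on {0..1}")
    case True
    then show "0 \<le> integral {0..1} ?f" using integrand by (rule integral_nonneg)
  next
    case False
    then show "0 \<le> integral {0..1} ?f" by (simp add: not_integrable_integral)
  qed
qed

lemma minimizer_energy_le:
  assumes "minimizer \<epsilon> \<alpha> \<psi> \<gamma>" "admissible \<psi> c" "0 \<le> \<alpha>"
  shows "energy \<epsilon> \<alpha> \<psi> \<gamma> \<le> energy \<epsilon> \<alpha> \<psi> c"
proof -
  have "bdd_below (energy \<epsilon> \<alpha> \<psi> ` {c. admissible \<psi> c})"
    using energy_nonneg[OF assms(3)] by (auto intro!: bdd_belowI[of _ 0])
  then show ?thesis
    using assms(1,2) unfolding minimizer_def by (simp add: cInf_lower)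
qed

lemma min_competitor_energy_less:
  fixes \<epsilon> \<alpha> b L :: real
  assumes "0 < \<epsilon>" "0 < \<alpha>" "1 \<le> L" "pi\<^sup>2 \<le> b * L"
  shows "min 1 (\<alpha> + pi\<^sup>2 * \<alpha> * \<epsilon>\<^sup>2) < \<epsilon>\<^sup>2 * b + \<alpha> * L"
proof -
  have L: "0 < L" using assms(3) by simp
  have b: "pi\<^sup>2 / L \<le> b" using assms(4) L by (simp add: divide_le_eq)
  then have bending: "\<epsilon>\<^sup>2 * (pi\<^sup>2 / L) \<le> \<epsilon>\<^sup>2 * b" by (rule mult_left_mono) simp
  have pos: "0 < \<epsilon>\<^sup>2 * (pi\<^sup>2 / L)" using assms(1) L by simp
  show ?thesis
  proof (cases "1 \<le> \<alpha> * L")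
    case True
    then show ?thesis using bending pos by linarith
  next
    case False
    then have "\<alpha> < 1 / L" using L by (simp add: field_simps)
    then have "\<epsilon>\<^sup>2 * pi\<^sup>2 * \<alpha> < \<epsilon>\<^sup>2 * pi\<^sup>2 * (1 / L)"
      using assms(1) by (intro mult_strict_left_mono) auto
    moreover have "\<alpha> \<le> \<alpha> * L" using assms(2,3) by simp
    ultimately show ?thesis using bending by (simp add: algebra_simps)
  qed
qed

lemma minimizer_energy_le_1:
  assumes "minimizer \<epsilon> \<alpha> \<psi> \<gamma>" "continuous_on {0..1} \<psi>" "0 \<le> \<alpha>" "\<alpha> \<le> 1"
  shows "energy \<epsilon> \<alpha> \<psi> \<gamma> \<le> 1"
proof -
  have "\<exists>x0\<in>{0..1}. \<forall>x\<in>{0..1}. \<psi> x \<le> \<psi> x0"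
    by (rule continuous_attains_sup) (use assms(2) in auto)
  then obtain h where h: "\<And>x. x \<in> {0..1} \<Longrightarrow> \<psi> x \<le> h" by blast
  have "admissible \<psi> (\<lambda>t. (t, h))" "energy \<epsilon> \<alpha> \<psi> (\<lambda>t. (t, h)) \<le> 1"
    using h assms(4) by (auto intro: admissible_horizontal_line energy_horizontal_line_le)
  then show ?thesis using minimizer_energy_le[OF assms(1) _ assms(3)] by fastforce
qed

lemma minimizer_energy_le_graph:
  fixes \<psi> \<psi>' \<psi>'' :: "real \<Rightarrow> real"
  assumes "minimizer \<epsilon> \<alpha> \<psi> \<gamma>"
    and \<psi>: "\<And>x. (\<psi> has_real_derivative \<psi>' x) (at x)" "\<And>x. (\<psi>' has_real_derivative \<psi>'' x) (at x)"
      "continuous_on {0..1} \<psi>''" "\<And>x. \<psi> (x + 1) = \<psi> x"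
    and "\<And>x. (\<psi>'' x)\<^sup>2 \<le> B" "0 \<le> \<alpha>"
  shows "energy \<epsilon> \<alpha> \<psi> \<gamma> \<le> \<alpha> + B * (\<epsilon>\<^sup>2 + \<alpha> / 8)"
  using minimizer_energy_le[OF assms(1) admissible_graph[OF \<psi>] assms(7)]
    energy_graph_le[OF \<psi> assms(6,7), where \<epsilon>=\<epsilon>] by linarith

lemma energy_gt_if_not_graph:
  assumes adm: "admissible \<psi> \<gamma>" and not_graph: "\<not> graph_curve \<psi> \<gamma>"
    and \<psi>: "continuous_on UNIV \<psi>" and "0 < \<epsilon>" "0 < \<alpha>" "\<alpha> \<le> 1"
  shows "min 1 (\<alpha> + pi\<^sup>2 * \<alpha> * \<epsilon>\<^sup>2) < energy \<epsilon> \<alpha> \<psi> \<gamma>"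
proof -
  have "pi\<^sup>2 \<le> (total_curvature \<gamma>)\<^sup>2"
    using pi_le_total_curvature[OF adm not_graph] by (simp add: power_mono)
  also have "\<dots> \<le> bending \<gamma> * curve_length \<gamma>"
    by (rule sq_total_curvature_le_bending_mult_length[OF adm])
  finally have "min 1 (\<alpha> + pi\<^sup>2 * \<alpha> * \<epsilon>\<^sup>2) < \<epsilon>\<^sup>2 * bending \<gamma> + \<alpha> * curve_length \<gamma>"
    by (rule min_competitor_energy_less[OF assms(4,5) curve_length_ge_1[OF adm]])
  also have "\<dots> \<le> energy \<epsilon> \<alpha> \<psi> \<gamma>"
    using energy_ge_bending_length[OF adm \<psi> assms(6)] .
  finally show ?thesis .
qed

theorem theorem3:
  fixes \<epsilon> \<alpha> :: real and \<psi> :: "real \<Rightarrow> real"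
  assumes "\<epsilon> > 0" and "0 < \<alpha>" and "\<alpha> < 1"
    and "\<forall>x. \<psi> (x + 1) = \<psi> x"
    and "\<forall>x. \<psi> differentiable (at x)"
    and "\<forall>x. deriv \<psi> differentiable (at x)"
    and "continuous_on UNIV (deriv (deriv \<psi>))"
    and "\<forall>x. (deriv (deriv \<psi>) x)\<^sup>2 \<le> 8 * pi\<^sup>2 / (8 / \<alpha> + 1 / \<epsilon>\<^sup>2)"
    and "minimizer \<epsilon> \<alpha> \<psi> \<gamma>"
  shows "graph_curve \<psi> \<gamma>"
proof (rule ccontr)
  assume not_graph: "\<not> graph_curve \<psi> \<gamma>"
  have \<psi>': "(\<psi> has_real_derivative deriv \<psi> x) (at x)"
    and \<psi>'': "(deriv \<psi> has_real_derivative deriv (deriv \<psi>) x) (at x)" for x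
    using assms(5,6) by (simp_all add: DERIV_deriv_iff_real_differentiable)
  have \<psi>_cont: "continuous_on UNIV \<psi>"
    using assms(5)
      by (simp add: continuous_at_imp_continuous_on differentiable_imp_continuous_within)
  have B: "8 * pi\<^sup>2 / (8 / \<alpha> + 1 / \<epsilon>\<^sup>2) * (\<epsilon>\<^sup>2 + \<alpha> / 8) = pi\<^sup>2 * \<alpha> * \<epsilon>\<^sup>2"
    using assms(1,2) add_pos_pos[of "\<alpha> * 8" "\<epsilon> * (\<epsilon> * 64)"]
    by (simp add: field_simps power2_eq_square)
  have "energy \<epsilon> \<alpha> \<psi> \<gamma> \<le> \<alpha> + pi\<^sup>2 * \<alpha> * \<epsilon>\<^sup>2"
    using minimizer_energy_le_graph[OF assms(9) \<psi>' \<psi>'' continuous_on_subset[OF assms(7) subset_UNIV]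
        assms(4)[rule_format] assms(8)[rule_format] less_imp_le[OF assms(2)]]
    unfolding B .
  moreover have "energy \<epsilon> \<alpha> \<psi> \<gamma> \<le> 1"
    using minimizer_energy_le_1[OF assms(9) continuous_on_subset[OF \<psi>_cont]] assms(2,3) by simp
  moreover have "min 1 (\<alpha> + pi\<^sup>2 * \<alpha> * \<epsilon>\<^sup>2) < energy \<epsilon> \<alpha> \<psi> \<gamma>"
    using assms(9) not_graph \<psi>_cont assms(1,2,3)
    by (intro energy_gt_if_not_graph) (auto simp: minimizer_def)
  ultimately show False by linarith
qed

end
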